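(* Let $p,q\ge0$, $n=p+q\ge1$, $N=2^{\lfloor (n+1)/2\rfloor}$. Let $M\in\mathcal{G}^{\mathbb{C}}_{p,q}$ and $T:=M^\dagger M$. Then ${\rm rank}(M)=N$ if $C_{(N)}(M)\ne0$; for $k\in\{2,\dots,N-1\}$, ${\rm rank}(M)=k$ if $C_{(N)}(M)=0$, $C_{(j)}(T)=0$ for all $j=k+1,\dots,N-1$, and $C_{(k)}(T)\neq0$; ${\rm rank}(M)=1$ if $C_{(N)}(M)=0$, $C_{(j)}(T)=0$ for all $j=2,\dots,N-1$, and $M\ne0$; ${\rm rank}(M)=0$ if $M=0$.
   Context: Let $\mathcal{G}_{p,q}$ be the real Clifford algebra with identity $e$ and generators $e_1,\dots,e_n$ satisfying $e_ae_b+e_be_a=2\eta_{ab}e$, $\eta={\rm diag}(1,\dots,1,-1,\dots,-1)$ ($p$ ones, $q$ minus ones), basis elements $e_A=e_{a_1}\cdots e_{a_k}$ for $a_1<\dots<a_k$, and $\mathcal{G}^{\mathbb{C}}_{p,q}=\mathbb{C}\otimes\mathcal{G}_{p,q}$ with elements $M=\sum_A m_Ae_A$, $m_A\in\mathbb{C}$. Hermitian conjugation: $M^\dagger=\sum_A\overline{m_A}(e_A)^{-1}$. Let $\langle M\rangle_0$ denote the coefficient of $e$. Let $\beta$ be an algebra isomorphism from $\mathcal{G}^{\mathbb{C}}_{p,q}$ onto ${\rm Mat}(N,\mathbb{C})$ if $n$ is even, and onto block-diagonal matrices ${\rm diag}(X,Y)$, $X,Y\in{\rm Mat}(N/2,\mathbb{C})$,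 if $n$ is odd. The rank is ${\rm rank}(M):={\rm rank}(\beta(M))$, independent of $\beta$. The characteristic polynomial coefficients $C_{(k)}(M)$ are defined by $\det(\lambda I_N-\beta(M))=\lambda^N-C_{(1)}(M)\lambda^{N-1}-\cdots-C_{(N)}(M)$ (independent of $\beta$); equivalently by the recursion $M_{(1)}=M$, $C_{(k)}=\frac{N}{k}\langle M_{(k)}\rangle_0$, $M_{(k+1)}=M(M_{(k)}-C_{(k)})$, $k=1,\dots,N$. *)

theory Defs
  imports "Jordan_Normal_Form.DL_Rank" "HOL-Library.Function_Algebras"
begin

text \<open>Elements of the complexified Clifford algebra G^C_{p,q} (n = p+q) are represented
  by their coefficient functions A \<mapsto> m_A, where the basis element e_A is indexed by a
  subset A of {0..<n} (generator e_{a+1} corresponds to index a).\<close>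

type_synonym cl = "nat set \<Rightarrow> complex"

definition clif :: "nat \<Rightarrow> cl set" where
  "clif n = {M. \<forall>A. M A \<noteq> 0 \<longrightarrow> A \<subseteq> {..<n}}"

definition eta :: "nat \<Rightarrow> nat \<Rightarrow> complex" where
  "eta p a = (if a < p then 1 else -1)"

text \<open>e_A e_B = basis_sign p A B * e_{A symmetric-difference B}.\<close>
definition basis_sign :: "nat \<Rightarrow> nat set \<Rightarrow> nat set \<Rightarrow> complex" where
  "basis_sign p A B = (-1) ^ card {(a, b). a \<in> A \<and> b \<in> B \<and> b < a} * (\<Prod>a\<in>A \<inter> B. eta p a)"

definition cl_basis :: "nat set \<Rightarrow> cl" where
  "cl_basis A = (\<lambda>C. if C = A then 1 else 0)"

definition cl_one :: cl where
  "cl_one = cl_basis {}"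

definition cl_mult :: "nat \<Rightarrow> nat \<Rightarrow> cl \<Rightarrow> cl \<Rightarrow> cl" where
  "cl_mult p q X Y = (\<lambda>C. \<Sum>A\<in>Pow {..<p+q}. \<Sum>B\<in>Pow {..<p+q}.
      if (A - B) \<union> (B - A) = C then X A * Y B * basis_sign p A B else 0)"

definition basis_inv :: "nat \<Rightarrow> nat \<Rightarrow> nat set \<Rightarrow> cl" where
  "basis_inv p q A = (THE X. X \<in> clif (p+q) \<and> cl_mult p q (cl_basis A) X = cl_one
                         \<and> cl_mult p q X (cl_basis A) = cl_one)"

definition cl_dagger :: "nat \<Rightarrow> nat \<Rightarrow> cl \<Rightarrow> cl" where
  "cl_dagger p q M = (\<lambda>C. \<Sum>A\<in>Pow {..<p+q}. cnj (M A) * basis_inv p q A C)"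

definition scalar_part :: "cl \<Rightarrow> complex" where
  "scalar_part M = M {}"

definition clif_N :: "nat \<Rightarrow> nat" where
  "clif_N n = 2 ^ ((n + 1) div 2)"

text \<open>Mseq p q N M k = M_(k+1) in the recursion
  M_(1) = M, C_(k) = N/k <M_(k)>_0, M_(k+1) = M (M_(k) - C_(k) e).\<close>
primrec Mseq :: "nat \<Rightarrow> nat \<Rightarrow> nat \<Rightarrow> cl \<Rightarrow> nat \<Rightarrow> cl" where
  "Mseq p q N M 0 = M"
| "Mseq p q N M (Suc k) = cl_mult p q M
     (\<lambda>A. Mseq p q N M k A - (of_nat N / of_nat (Suc k)) * scalar_part (Mseq p q N M k) * cl_one A)"

text \<open>Characteristic polynomial coefficient C_(k)(M), for k \<ge> 1.\<close>
definition char_coeff :: "nat \<Rightarrow> nat \<Rightarrow> cl \<Rightarrow> nat \<Rightarrow> complex" where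
  "char_coeff p q M k = of_nat (clif_N (p+q)) / of_nat k * scalar_part (Mseq p q (clif_N (p+q)) M (k - 1))"

definition beta_target :: "nat \<Rightarrow> complex mat set" where
  "beta_target n = (let N = clif_N n in
     if even n then carrier_mat N N
     else {A \<in> carrier_mat N N. \<forall>i<N. \<forall>j<N.
              ((i < N div 2) \<noteq> (j < N div 2)) \<longrightarrow> A $$ (i, j) = 0})"

definition is_beta :: "nat \<Rightarrow> nat \<Rightarrow> (cl \<Rightarrow> complex mat) \<Rightarrow> bool" where
  "is_beta p q \<beta> \<longleftrightarrow>
     bij_betw \<beta> (clif (p+q)) (beta_target (p+q)) \<and>
     (\<forall>X\<in>clif (p+q). \<forall>Y\<in>clif (p+q). \<beta> (X + Y) = \<beta> X + \<beta> Y) \<and>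
     (\<forall>c. \<forall>X\<in>clif (p+q). \<beta> (\<lambda>A. c * X A) = c \<cdot>\<^sub>m \<beta> X) \<and>
     (\<forall>X\<in>clif (p+q). \<forall>Y\<in>clif (p+q). \<beta> (cl_mult p q X Y) = \<beta> X * \<beta> Y) \<and>
     \<beta> cl_one = 1\<^sub>m (clif_N (p+q))"

definition cl_rank :: "nat \<Rightarrow> nat \<Rightarrow> (cl \<Rightarrow> complex mat) \<Rightarrow> cl \<Rightarrow> nat" where
  "cl_rank p q \<beta> M = vec_space.rank (clif_N (p+q)) (\<beta> M)"

end

(*
  Under beta the element M becomes an N x N matrix A = beta M, and the recursion defining the
  C_(k) becomes the Faddeev-LeVerrier recursion for A. Every basis element e_A with A nonempty is
  traceless under beta: it anticommutes with a suitable generator, or, for odd n and A the full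
  index set, it is central and acts by opposite scalars on the two diagonal blocks. Hence
  trace o beta = N <.>_0, so the C_(k)(M) are, up to sign, the coefficients of the characteristic
  polynomial of A, and C_(N)(M) vanishes exactly when det A does.

  For the coefficientwise Hermitian product on G^C_{p,q}, left multiplication by M^dagger is
  adjoint to left multiplication by M. Therefore beta T = beta(M^dagger) A has the kernel of A,
  the same kernel as its square, and nonnegative eigenvalues. Its characteristic polynomial is
  x^(N - rank M) times a polynomial whose coefficients strictly alternate in sign, so C_(j)(T) is
  nonzero exactly for j <= rank M.
*)

theory Submission
  imports
    Defs
    "Jordan_Normal_Form.Jordan_Normal_Form_Uniqueness"
    "Jordan_Normal_Form.Jordan_Normal_Form_Existence"
    "Jordan_Normal_Form.Schur_Decomposition"
begin

section \<open>Traces and the Faddeev--LeVerrier recursion\<close>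

definition mat_trace :: "'a :: comm_ring_1 mat \<Rightarrow> 'a" where
  "mat_trace A = (\<Sum>i<dim_row A. A $$ (i, i))"

lemma mat_trace_add:
  "A \<in> carrier_mat n n \<Longrightarrow> B \<in> carrier_mat n n \<Longrightarrow> mat_trace (A + B) = mat_trace A + mat_trace B"
  unfolding mat_trace_def by (simp add: sum.distrib)

lemma mat_trace_smult: "A \<in> carrier_mat n n \<Longrightarrow> mat_trace (c \<cdot>\<^sub>m A) = c * mat_trace A"
  unfolding mat_trace_def by (simp add: sum_distrib_left)

lemma mat_trace_one: "mat_trace (1\<^sub>m n) = of_nat n"
  unfolding mat_trace_def by simp

lemma mat_trace_mult_comm:
  assumes "A \<in> carrier_mat n m" "B \<in> carrier_mat m n"
  shows "mat_trace (A * B) = mat_trace (B * A)"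
proof -
  have "mat_trace (A * B) = (\<Sum>i<n. \<Sum>k<m. A $$ (i, k) * B $$ (k, i))"
    unfolding mat_trace_def using assms
    by (intro sum.cong refl) (auto simp: scalar_prod_def atLeast0LessThan)
  also have "\<dots> = (\<Sum>k<m. \<Sum>i<n. B $$ (k, i) * A $$ (i, k))"
    by (subst sum.swap) (simp add: mult.commute)
  also have "\<dots> = mat_trace (B * A)"
    unfolding mat_trace_def using assms
    by (intro sum.cong refl) (auto simp: scalar_prod_def atLeast0LessThan)
  finally show ?thesis .
qed

lemma mat_trace_conjugate:
  assumes "F \<in> carrier_mat n n" "P \<in> carrier_mat n n" "Q \<in> carrier_mat n n" "Q * P = 1\<^sub>m n"
  shows "mat_trace (P * F * Q) = mat_trace F"
proof -
  have "mat_trace (P * F * Q) = mat_trace (P * (F * Q))"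
    using assms by (simp add: assoc_mult_mat[of _ n n _ n _ n])
  also have "\<dots> = mat_trace ((F * Q) * P)"
    using assms by (intro mat_trace_mult_comm) auto
  also have "(F * Q) * P = F"
    using assms by (simp add: assoc_mult_mat[of _ n n _ n _ n])
  finally show ?thesis .
qed

lemma upper_triangular_mult:
  fixes A B :: "'a :: comm_ring_1 mat"
  assumes A: "A \<in> carrier_mat n n" and B: "B \<in> carrier_mat n n"
    and uA: "upper_triangular A" and uB: "upper_triangular B"
  shows "upper_triangular (A * B)"
    and "\<And>i. i < n \<Longrightarrow> (A * B) $$ (i, i) = A $$ (i, i) * B $$ (i, i)"
proof -
  have entry: "(A * B) $$ (i, j) = (\<Sum>l\<in>{0..<n}. A $$ (i, l) * B $$ (l, j))" if "i < n" "j < n" for i j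
    using A B that by (simp add: scalar_prod_def)
  have A0: "A $$ (i, l) = 0" if "i < n" "l < i" for i l
    using uA A that by (auto simp: upper_triangular_def)
  have B0: "B $$ (l, j) = 0" if "l < n" "j < l" for l j
    using uB B that by (auto simp: upper_triangular_def)
  show "upper_triangular (A * B)"
  proof (rule upper_triangularI)
    fix i j assume ij: "j < i" "i < dim_row (A * B)"
    then have i: "i < n" using A by simp
    have "(A * B) $$ (i, j) = (\<Sum>l\<in>{0..<n}. A $$ (i, l) * B $$ (l, j))"
      using entry i ij by simp
    also have "\<dots> = 0"
    proof (intro sum.neutral ballI)
      fix l assume "l \<in> {0..<n}"
      then show "A $$ (i, l) * B $$ (l, j) = 0"
        using A0[OF i, of l] B0[of l j] ij by (cases "l < i") auto
    qed
    finally show "(A * B) $$ (i, j) = 0" .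
  qed
  fix i assume i: "i < n"
  have "(A * B) $$ (i, i) = (\<Sum>l\<in>{0..<n}. if l = i then A $$ (i, i) * B $$ (i, i) else 0)"
    unfolding entry[OF i i]
  proof (intro sum.cong refl)
    fix l assume "l \<in> {0..<n}"
    then show "A $$ (i, l) * B $$ (l, i) = (if l = i then A $$ (i, i) * B $$ (i, i) else 0)"
      using A0[OF i, of l] B0[of l i] by (cases "l < i"; cases "l = i") auto
  qed
  then show "(A * B) $$ (i, i) = A $$ (i, i) * B $$ (i, i)" using i by simp
qed

lemma coeff_quotient_linear_factor:
  fixes Q P :: "'a :: idom poly"
  assumes eq: "Q * [:-y, 1:] = P" and deg: "degree P = m" and t: "t < m"
  shows "coeff Q (m - 1 - t) = (\<Sum>j\<le>t. coeff P (m - j) * y ^ (t - j))"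
  using t
proof (induct t)
  have "P \<noteq> 0" using deg t by auto
  then have "Q \<noteq> 0" using eq by auto
  then have "degree P = degree Q + 1"
    using eq degree_mult_eq[of Q "[:-y, 1:]"] by simp
  then have degQ: "degree Q < m" using deg by simp
  have rec: "coeff Q k = coeff P (Suc k) + y * coeff Q (Suc k)" for k
    using arg_cong[OF eq[symmetric], of "\<lambda>p. coeff p (Suc k)"] by simp
  {
    case 0
    have "coeff Q (m - 1) = coeff P m + y * coeff Q m" using rec[of "m - 1"] 0 by simp
    then show ?case using degQ by (simp add: coeff_eq_0)
  next
    case (Suc t)
    have "m - 1 - t = Suc (m - 1 - Suc t)" "m - 1 - t = m - Suc t" using Suc by auto
    then have "coeff Q (m - 1 - Suc t) = coeff P (m - Suc t) + y * coeff Q (m - 1 - t)"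
      using rec[of "m - 1 - Suc t"] by simp
    also have "y * coeff Q (m - 1 - t) = (\<Sum>j\<le>t. coeff P (m - j) * y ^ (Suc t - j))"
      using Suc by (simp add: sum_distrib_left Suc_diff_le mult.left_commute)
    finally show ?case by simp
  }
qed

lemma coeff_pderiv_prod_linear:
  fixes l :: "nat \<Rightarrow> 'a :: idom" and m :: nat
  defines "P \<equiv> (\<Prod>i<m. [:- l i, 1:])"
  assumes t: "t < m"
  shows "(\<Sum>j\<le>t. coeff P (m - j) * (\<Sum>i<m. l i ^ (t - j))) = of_nat (m - t) * coeff P (m - t)"
proof -
  define Q where "Q i = (\<Prod>j\<in>{..<m} - {i}. [:- l j, 1:])" for i
  have deg: "degree P = m" unfolding P_def by (subst degree_prod_eq_sum_degree) auto
  have QP: "Q i * [:- l i, 1:] = P" if "i < m" for i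
    unfolding Q_def P_def using that by (simp add: prod.remove mult.commute)
  have "pderiv P = (\<Sum>i<m. Q i)"
    unfolding P_def pderiv_prod Q_def by (simp add: pderiv_pCons)
  then have "coeff (pderiv P) (m - 1 - t) = (\<Sum>i<m. coeff (Q i) (m - 1 - t))"
    by (simp add: coeff_sum)
  also have "\<dots> = (\<Sum>i<m. \<Sum>j\<le>t. coeff P (m - j) * l i ^ (t - j))"
    using coeff_quotient_linear_factor[OF QP deg t] by simp
  also have "\<dots> = (\<Sum>j\<le>t. coeff P (m - j) * (\<Sum>i<m. l i ^ (t - j)))"
    by (subst sum.swap) (simp add: sum_distrib_left)
  finally have "coeff (pderiv P) (m - 1 - t) = (\<Sum>j\<le>t. coeff P (m - j) * (\<Sum>i<m. l i ^ (t - j)))" .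
  moreover have "coeff (pderiv P) (m - 1 - t) = of_nat (m - t) * coeff P (m - t)"
    using coeff_pderiv[of P "m - 1 - t"] t by (simp add: Suc_diff_Suc)
  ultimately show ?thesis by simp
qed

theorem newton_identities:
  fixes l :: "nat \<Rightarrow> 'a :: idom" and m :: nat
  defines "P \<equiv> (\<Prod>i<m. [:- l i, 1:])"
  assumes s: "1 \<le> s" "s \<le> m"
  shows "of_nat s * coeff P (m - s) + (\<Sum>j<s. coeff P (m - j) * (\<Sum>i<m. l i ^ (s - j))) = 0"
proof (cases "s < m")
  case True
  have "(\<Sum>j<s. coeff P (m - j) * (\<Sum>i<m. l i ^ (s - j))) + coeff P (m - s) * of_nat m
      = of_nat (m - s) * coeff P (m - s)"
    using coeff_pderiv_prod_linear[OF True, of l] unfolding P_def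
    by (simp add: lessThan_Suc_atMost[symmetric])
  moreover have "of_nat (m - s) = (of_nat m - of_nat s :: 'a)" using True by (simp add: of_nat_diff)
  ultimately show ?thesis by (simp add: algebra_simps)
next
  case False
  then have sm: "s = m" using s by simp
  have deg: "degree P = m" unfolding P_def by (subst degree_prod_eq_sum_degree) auto
  have "poly P (l i) = 0" if "i < m" for i
    unfolding P_def poly_prod using that by (auto intro!: prod_zero)
  then have "0 = (\<Sum>i<m. poly P (l i))" by simp
  also have "\<dots> = (\<Sum>i<m. \<Sum>j\<le>m. coeff P (m - j) * l i ^ (m - j))"
  proof (intro sum.cong refl)
    fix i
    show "poly P (l i) = (\<Sum>j\<le>m. coeff P (m - j) * l i ^ (m - j))"
      unfolding poly_altdef deg atLeast0AtMost[symmetric]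
      by (subst sum.atLeastAtMost_rev) simp
  qed
  also have "\<dots> = (\<Sum>j\<le>m. coeff P (m - j) * (\<Sum>i<m. l i ^ (m - j)))"
    by (subst sum.swap) (simp add: sum_distrib_left)
  also have "\<dots> = (\<Sum>j<m. coeff P (m - j) * (\<Sum>i<m. l i ^ (m - j))) + coeff P 0 * of_nat m"
    by (simp add: lessThan_Suc_atMost[symmetric])
  finally show ?thesis unfolding sm by (simp add: algebra_simps)
qed

(* faddeev_mat A c k is the matrix counterpart of M_(k+1) in the recursion defining C_(k). *)
primrec faddeev_mat :: "'a :: comm_ring_1 mat \<Rightarrow> (nat \<Rightarrow> 'a) \<Rightarrow> nat \<Rightarrow> 'a mat" where
  "faddeev_mat A c 0 = A"
| "faddeev_mat A c (Suc k) = A * (faddeev_mat A c k - c k \<cdot>\<^sub>m 1\<^sub>m (dim_row A))"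

lemma faddeev_mat_carrier: "A \<in> carrier_mat n n \<Longrightarrow> faddeev_mat A c k \<in> carrier_mat n n"
  by (induct k) auto

lemma faddeev_mat_similar:
  assumes A: "A \<in> carrier_mat n n" and sim: "similar_mat_wit A B P Q"
  shows "faddeev_mat A c k = P * faddeev_mat B c k * Q"
proof (induct k)
  case 0
  then show ?case using similar_mat_witD2[OF A sim] by simp
next
  case (Suc k)
  note w = similar_mat_witD2[OF A sim]
  define G where "G = faddeev_mat B c k - c k \<cdot>\<^sub>m 1\<^sub>m n"
  have F: "faddeev_mat B c k \<in> carrier_mat n n" using faddeev_mat_carrier w(5) .
  have G: "G \<in> carrier_mat n n" unfolding G_def using F by (intro minus_carrier_mat) simp
  have PG: "P * G = P * faddeev_mat B c k - c k \<cdot>\<^sub>m P"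
    unfolding G_def using w F
    by (simp add: mult_minus_distrib_mat[of P n n] mult_smult_distrib[of P n n "1\<^sub>m n" n])
  have PGQ: "P * faddeev_mat B c k * Q - c k \<cdot>\<^sub>m 1\<^sub>m n = P * G * Q"
    unfolding PG using w F
    by (simp add: minus_mult_distrib_mat[of _ n n] mult_smult_assoc_mat[of P n n Q n])
  have QP: "Q * (P * X) = X" if "X \<in> carrier_mat n n" for X
    using w that by (simp add: assoc_mult_mat[of Q n n P n X n, symmetric])
  have "A * (P * G * Q) = P * (B * G) * Q"
    using w G by (simp add: assoc_mult_mat[of _ n n _ n _ n] QP)
  then show ?case using Suc w by (simp add: PGQ G_def)
qed

lemma faddeev_mat_upper_triangular:
  assumes B: "B \<in> carrier_mat n n" and uB: "upper_triangular B"
  shows "upper_triangular (faddeev_mat B c k)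
    \<and> (\<forall>i<n. faddeev_mat B c k $$ (i, i) = B $$ (i, i) ^ Suc k - (\<Sum>j<k. c j * B $$ (i, i) ^ (k - j)))"
proof (induct k)
  case 0
  then show ?case using uB by simp
next
  case (Suc k)
  let ?F = "faddeev_mat B c k"
  let ?G = "?F - c k \<cdot>\<^sub>m 1\<^sub>m n"
  have F: "?F \<in> carrier_mat n n" using faddeev_mat_carrier[OF B] .
  have G: "?G \<in> carrier_mat n n" using F by (intro minus_carrier_mat) simp
  have uG: "upper_triangular ?G" using Suc F by (auto simp: upper_triangular_def)
  have step: "x * (x ^ Suc k - (\<Sum>j<k. c j * x ^ (k - j)) - c k)
      = x ^ Suc (Suc k) - (\<Sum>j<Suc k. c j * x ^ (Suc k - j))" for x
  proof -
    have "x * (\<Sum>j<k. c j * x ^ (k - j)) = (\<Sum>j<k. c j * x ^ (Suc k - j))"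
      by (simp add: sum_distrib_left Suc_diff_le mult.left_commute)
    then show ?thesis by (simp add: algebra_simps)
  qed
  have "faddeev_mat B c (Suc k) = B * ?G" using B by simp
  moreover have "(B * ?G) $$ (i, i) = B $$ (i, i) ^ Suc (Suc k) - (\<Sum>j<Suc k. c j * B $$ (i, i) ^ (Suc k - j))"
    if i: "i < n" for i
    using upper_triangular_mult(2)[OF B G uB uG i] Suc F i step[of "B $$ (i, i)"] by simp
  ultimately show ?case using upper_triangular_mult(1)[OF B G uB uG] by simp
qed

lemma mat_trace_faddeev_mat_power_sums:
  fixes A :: "complex mat"
  assumes A: "A \<in> carrier_mat n n"
  obtains l where "char_poly A = (\<Prod>i<n. [:- l i, 1:])"
    and "\<And>k. mat_trace (faddeev_mat A c k)
      = (\<Sum>i<n. l i ^ Suc k) - (\<Sum>j<k. c j * (\<Sum>i<n. l i ^ (k - j)))"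
proof -
  obtain es where cp: "char_poly A = (\<Prod>a\<leftarrow>es. [:- a, 1:])" and les: "length es = n"
    using char_poly_factorized[OF A] by blast
  obtain B P Q where sd: "schur_decomposition A es = (B, P, Q)"
    by (cases "schur_decomposition A es") auto
  from schur_decomposition[OF A cp sd]
  have sim: "similar_mat_wit A B P Q" and uB: "upper_triangular B" and dB: "diag_mat B = es"
    by auto
  have B: "B \<in> carrier_mat n n" using similar_mat_witD2[OF A sim] by simp
  define l where "l i = B $$ (i, i)" for i
  have "es = map l [0..<n]"
    using dB B unfolding diag_mat_def l_def by simp
  then have "char_poly A = (\<Prod>i<n. [:- l i, 1:])"
    unfolding cp by (simp add: prod.distinct_set_conv_list[symmetric] atLeast0LessThan)
  moreover have "mat_trace (faddeev_mat A c k)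
      = (\<Sum>i<n. l i ^ Suc k) - (\<Sum>j<k. c j * (\<Sum>i<n. l i ^ (k - j)))" for k
  proof -
    have "mat_trace (faddeev_mat A c k) = mat_trace (P * faddeev_mat B c k * Q)"
      unfolding faddeev_mat_similar[OF A sim] ..
    also have "\<dots> = mat_trace (faddeev_mat B c k)"
      using similar_mat_witD2[OF A sim] faddeev_mat_carrier[OF B] by (intro mat_trace_conjugate) auto
    also have "\<dots> = (\<Sum>i<n. l i ^ Suc k - (\<Sum>j<k. c j * l i ^ (k - j)))"
      unfolding mat_trace_def l_def using faddeev_mat_upper_triangular[OF B uB, of c k]
        faddeev_mat_carrier[OF B, of c k] by simp
    also have "\<dots> = (\<Sum>i<n. l i ^ Suc k) - (\<Sum>j<k. c j * (\<Sum>i<n. l i ^ (k - j)))"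
      unfolding sum_subtractf sum_distrib_left by (subst (2) sum.swap) (simp add: mult.assoc)
    finally show ?thesis .
  qed
  ultimately show ?thesis using that by blast
qed

theorem faddeev_leverrier:
  fixes A :: "complex mat"
  assumes A: "A \<in> carrier_mat n n"
    and c: "\<And>k. k < n \<Longrightarrow> of_nat (Suc k) * c k = mat_trace (faddeev_mat A c k)"
    and k: "k < n"
  shows "c k = - coeff (char_poly A) (n - Suc k)"
proof -
  obtain l where chi: "char_poly A = (\<Prod>i<n. [:- l i, 1:])"
    and tr: "\<And>k. mat_trace (faddeev_mat A c k)
      = (\<Sum>i<n. l i ^ Suc k) - (\<Sum>j<k. c j * (\<Sum>i<n. l i ^ (k - j)))"
    using mat_trace_faddeev_mat_power_sums[OF A] by blast
  define a where "a j = coeff (char_poly A) (n - j)" for j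
  define pw where "pw s = (\<Sum>i<n. l i ^ s)" for s
  have a0: "a 0 = 1" unfolding a_def using degree_monic_char_poly[OF A] by simp
  have newton: "of_nat s * a s + (\<Sum>j<s. a j * pw (s - j)) = 0" if "1 \<le> s" "s \<le> n" for s
    using newton_identities[OF that, of l] unfolding a_def pw_def chi .
  show ?thesis
    using k
  proof (induct k rule: less_induct)
    case (less k)
    have IH: "c j = - a (Suc j)" if "j < k" for j using less that unfolding a_def by simp
    have "of_nat (Suc k) * c k = pw (Suc k) - (\<Sum>j<k. c j * pw (k - j))"
      using c[OF less(2)] tr unfolding pw_def by simp
    also have "\<dots> = pw (Suc k) + (\<Sum>j<k. a (Suc j) * pw (k - j))"
      using IH by (simp add: sum_negf[symmetric])
    also have "\<dots> = (\<Sum>j<Suc k. a j * pw (Suc k - j))"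
      by (subst sum.lessThan_Suc_shift) (simp add: a0)
    also have "\<dots> = of_nat (Suc k) * (- a (Suc k))"
      using newton[of "Suc k"] less(2) by (simp add: eq_neg_iff_add_eq_0 add.commute)
    finally show ?case unfolding a_def by (simp only: mult_cancel_left of_nat_eq_0_iff) simp
  qed
qed

section \<open>Characteristic polynomials with nonnegative spectrum\<close>

lemma rank_plus_kernel_dim:
  fixes A :: "'a :: field mat"
  assumes A: "A \<in> carrier_mat n n"
  shows "vec_space.rank n A + kernel_dim A = n"
proof -
  interpret V: vec_space "TYPE('a)" n .
  define T where "T = (\<lambda>v. A *\<^sub>v v)"
  have "T \<in> LinearCombinations.module_hom class_ring V.V V.V"
    unfolding LinearCombinations.module_hom_def T_def using A
    by (auto simp: mult_add_distrib_mat_vec[OF A] mult_mat_vec[OF A])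
  then have hom: "mod_hom class_ring V.V V.V T"
    by (intro mod_hom.intro, unfold mod_hom_axioms_def) (intro_locales, intro_locales)
  interpret L: linear_map class_ring V.V V.V T
    unfolding linear_map_def using V.vectorspace_axioms hom by blast
  have im: "L.imT = V.span (set (cols A))"
  proof -
    have "L.imT = T ` carrier_vec n" unfolding mod_hom.im_def[OF hom] by simp
    also have "\<dots> = V.col_space A" unfolding V.col_space_eq[OF A] T_def using A by auto
    finally show ?thesis unfolding V.col_space_def .
  qed
  have ker: "L.kerT = mat_kernel A"
    unfolding mod_hom.ker_def[OF hom] unfolding mat_kernel_def T_def using A by auto
  interpret K: kernel n n A by (unfold_locales, rule A)
  show ?thesis
    using L.rank_nullity[OF V.fin_dim] unfolding im ker V.rank_def V.dim_is_n by simp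
qed

lemma kernel_dim_cong:
  "mat_kernel A = mat_kernel B \<Longrightarrow> dim_col A = dim_col B \<Longrightarrow> kernel_dim A = kernel_dim B"
  unfolding kernel_dim_def by simp

lemma coeff_linear_factor_mult_alternating:
  fixes P :: "complex poly" and d :: "nat \<Rightarrow> real"
  assumes coeff_d: "\<And>i. coeff P i = (-1) ^ (L - i) * of_real (d i)"
    and d_beyond: "\<And>i. L < i \<Longrightarrow> d i = 0"
  shows "coeff ([:- of_real r, 1:] * P) i
    = (-1) ^ (Suc L - i) * of_real (case i of 0 \<Rightarrow> r * d 0 | Suc j \<Rightarrow> d j + r * d (Suc j))"
proof (cases i)
  case 0
  then show ?thesis by (simp add: coeff_d)
next
  case (Suc j)
  have sign: "(-1) ^ (L - Suc j) * of_real (d (Suc j)) = - ((-1) ^ (L - j) * of_real (d (Suc j)) :: complex)"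
  proof (cases "Suc j \<le> L")
    case True
    then have "L - j = Suc (L - Suc j)" by simp
    then show ?thesis by simp
  qed (simp add: d_beyond)
  have "coeff ([:- of_real r, 1:] * P) i
      = (-1) ^ (L - j) * of_real (d j) - of_real r * ((-1) ^ (L - Suc j) * of_real (d (Suc j)))"
    by (simp add: Suc coeff_d)
  also have "\<dots> = (-1) ^ (L - j) * (of_real (d j) + of_real r * of_real (d (Suc j)))"
    unfolding sign by (simp add: algebra_simps)
  finally show ?thesis by (simp add: Suc)
qed

lemma coeff_prod_linear_nonneg_roots:
  fixes es :: "complex list"
  assumes "\<forall>a\<in>set es. 0 \<le> a"
  shows "\<exists>d :: nat \<Rightarrow> real.
    (\<forall>i. coeff (\<Prod>a\<leftarrow>es. [:-a, 1:]) i = (-1) ^ (length es - i) * of_real (d i)) \<and> (\<forall>i. 0 \<le> d i)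
    \<and> (\<forall>i. 0 < d i \<longleftrightarrow> length (filter (\<lambda>a. a = 0) es) \<le> i \<and> i \<le> length es)"
  using assms
proof (induct es)
  case Nil
  show ?case by (rule exI[of _ "\<lambda>i. if i = 0 then 1 else 0"]) (auto simp: coeff_1)
next
  case (Cons a es)
  let ?L = "length es" and ?z = "length (filter (\<lambda>a. a = 0) es)"
  from Cons obtain d where
    coeff_d: "\<And>i. coeff (\<Prod>a\<leftarrow>es. [:-a, 1:]) i = (-1) ^ (?L - i) * of_real (d i)"
    and d_nonneg: "\<And>i. 0 \<le> d i" and d_pos: "\<And>i. 0 < d i \<longleftrightarrow> ?z \<le> i \<and> i \<le> ?L"
    by auto
  define r where "r = Re a"
  have ar: "a = of_real r" and r: "0 \<le> r"
    using Cons(2) unfolding r_def by (auto simp: less_eq_complex_def complex_eq_iff)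
  have zL: "?z \<le> ?L" by (rule length_filter_le)
  have d_beyond: "d i = 0" if "?L < i" for i
    using d_pos[of i] d_nonneg[of i] that by auto
  define d' where "d' i = (case i of 0 \<Rightarrow> r * d 0 | Suc j \<Rightarrow> d j + r * d (Suc j))" for i
  have "coeff (\<Prod>a\<leftarrow>a # es. [:-a, 1:]) i = (-1) ^ (Suc ?L - i) * of_real (d' i)" for i
    using coeff_linear_factor_mult_alternating[OF coeff_d d_beyond, of r i] unfolding d'_def ar by simp
  moreover have "0 \<le> d' i" for i
    using d_nonneg r by (simp add: d'_def split: nat.split)
  moreover have "0 < d' i \<longleftrightarrow> length (filter (\<lambda>a. a = 0) (a # es)) \<le> i \<and> i \<le> length (a # es)"
    for i
  proof (cases i)
    case 0
    have "0 < r * d 0 \<longleftrightarrow> 0 < r \<and> 0 < d 0"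
      using d_nonneg[of 0] r by (simp add: zero_less_mult_iff)
    then show ?thesis using d_pos[of 0] r unfolding 0 d'_def ar by auto
  next
    case (Suc j)
    have "0 \<le> r * d (Suc j)" using d_nonneg r by simp
    then have "0 < d j + r * d (Suc j) \<longleftrightarrow> 0 < d j \<or> 0 < r * d (Suc j)"
      using d_nonneg[of j] by linarith
    also have "0 < r * d (Suc j) \<longleftrightarrow> 0 < r \<and> 0 < d (Suc j)"
      using d_nonneg[of "Suc j"] r by (simp add: zero_less_mult_iff)
    finally have "0 < d j + r * d (Suc j) \<longleftrightarrow> 0 < d j \<or> (0 < r \<and> 0 < d (Suc j))" .
    then show ?thesis using d_pos[of j] d_pos[of "Suc j"] zL r unfolding Suc d'_def ar
      by (cases "r = 0") (auto simp del: length_filter_le)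
  qed
  ultimately show ?case by (intro exI[of _ d']) simp
qed

lemma order_0_prod_linear:
  "order 0 (\<Prod>a\<leftarrow>es. [:-a, 1:]) = length (filter (\<lambda>a. a = 0) (es :: 'a :: idom list))"
proof (induct es)
  case Nil
  then show ?case by (simp add: order_0I)
next
  case (Cons a es)
  have "(\<Prod>a\<leftarrow>es. [:-a, 1:]) \<noteq> 0" by (auto simp: prod_list_zero_iff)
  then have "[:-a, 1:] * (\<Prod>a\<leftarrow>es. [:-a, 1:]) \<noteq> 0" by (simp only: mult_eq_0_iff) simp
  then have "order 0 ([:-a, 1:] * (\<Prod>a\<leftarrow>es. [:-a, 1:])) = order 0 [:-a, 1:] + order 0 (\<Prod>a\<leftarrow>es. [:-a, 1:])"
    by (rule order_mult)
  moreover have "order 0 [:-a, 1:] = (if a = 0 then 1 else 0)"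
    using order_power_n_n[of 0 1] by (auto intro: order_0I)
  ultimately show ?case using Cons by simp
qed

lemma sum_list_eq_sum_list_min_1:
  "sum_list (map (min 1) (xs :: nat list)) = sum_list (map (min 2) xs) \<Longrightarrow> sum_list xs = sum_list (map (min 1) xs)"
proof (induct xs)
  case (Cons x xs)
  have "sum_list (map (min 1) xs) \<le> sum_list (map (min 2) xs)"
    by (induct xs) (auto intro: add_mono)
  with Cons(2) have "min 1 x = min (2 :: nat) x" "sum_list (map (min 1) xs) = sum_list (map (min 2) xs)"
    by auto
  then show ?case using Cons(1) by (cases x) auto
qed simp

(* ker C^2 = ker C forces every Jordan block for the eigenvalue 0 to have size 1. *)
lemma order_0_char_poly_eq_kernel_dim:
  fixes C :: "complex mat"
  assumes C: "C \<in> carrier_mat n n"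
    and ker: "\<And>v. v \<in> carrier_vec n \<Longrightarrow> C *\<^sub>v (C *\<^sub>v v) = 0\<^sub>v n \<Longrightarrow> C *\<^sub>v v = 0\<^sub>v n"
  shows "order 0 (char_poly C) = kernel_dim C"
proof -
  obtain es where "char_poly C = (\<Prod>a\<leftarrow>es. [:- a, 1:])"
    using char_poly_factorized[OF C] by blast
  then obtain n_as where jnf: "jordan_nf C n_as" using jordan_nf_exists[OF C] by blast
  have char0: "char_matrix C 0 = C" unfolding char_matrix_def using C by (intro eq_matI) auto
  have "mat_kernel (C * C) = mat_kernel C"
    using C ker unfolding mat_kernel_def by (auto simp: assoc_mult_mat_vec[of C n n C n])
  then have "kernel_dim (C * C) = kernel_dim C"
    unfolding kernel_dim_def using C by simp
  then have dim2: "dim_gen_eigenspace C 0 2 = kernel_dim C"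
    unfolding dim_gen_eigenspace_def char0 using C by (simp add: numeral_2_eq_2)
  have dim1: "dim_gen_eigenspace C 0 1 = kernel_dim C"
    unfolding dim_gen_eigenspace_def char0 using C by simp
  let ?sizes = "map fst [(n, e)\<leftarrow>n_as . e = 0]"
  have "sum_list ?sizes = kernel_dim C"
    using sum_list_eq_sum_list_min_1[of ?sizes] dim_gen_eigenspace[OF jnf, of 0 1] dim1
      dim_gen_eigenspace[OF jnf, of 0 2] dim2 by simp
  moreover have "[(n, e)\<leftarrow>n_as . e = 0] = filter (\<lambda>na. snd na = 0) n_as"
    by (induct n_as) auto
  ultimately show ?thesis using jordan_nf_order[OF jnf, of 0] by simp
qed

lemma coeff_char_poly_nonzero_iff:
  fixes C :: "complex mat"
  assumes C: "C \<in> carrier_mat n n"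
    and nonneg: "\<And>a. eigenvalue C a \<Longrightarrow> 0 \<le> a"
    and ker: "\<And>v. v \<in> carrier_vec n \<Longrightarrow> C *\<^sub>v (C *\<^sub>v v) = 0\<^sub>v n \<Longrightarrow> C *\<^sub>v v = 0\<^sub>v n"
    and i: "i \<le> n"
  shows "coeff (char_poly C) i \<noteq> 0 \<longleftrightarrow> kernel_dim C \<le> i"
proof -
  obtain es where cp: "char_poly C = (\<Prod>a\<leftarrow>es. [:- a, 1:])" and les: "length es = n"
    using char_poly_factorized[OF C] by blast
  have "\<forall>a\<in>set es. 0 \<le> a"
  proof
    fix a assume "a \<in> set es"
    then have "poly (char_poly C) a = 0"
      unfolding cp poly_prod_list by (auto simp: prod_list_zero_iff)
    then show "0 \<le> a" using nonneg eigenvalue_root_char_poly[OF C] by simp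
  qed
  from coeff_prod_linear_nonneg_roots[OF this, folded cp, unfolded les]
  obtain d where d:
    "\<forall>i. coeff (char_poly C) i = (-1) ^ (n - i) * of_real (d i)" "\<forall>i. 0 \<le> d i"
    "\<forall>i. 0 < d i \<longleftrightarrow> length (filter (\<lambda>a. a = 0) es) \<le> i \<and> i \<le> n"
    by blast
  have z: "length (filter (\<lambda>a. a = 0) es) = kernel_dim C"
    using order_0_char_poly_eq_kernel_dim[OF C ker] unfolding cp order_0_prod_linear .
  have "coeff (char_poly C) i \<noteq> 0 \<longleftrightarrow> d i \<noteq> 0" using d(1) by simp
  also have "\<dots> \<longleftrightarrow> 0 < d i" using spec[OF d(2), of i] by linarith
  also have "\<dots> \<longleftrightarrow> kernel_dim C \<le> i" using d(3) z i by simp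
  finally show ?thesis .
qed

section \<open>Matrix units and column embeddings\<close>

definition matrix_unit :: "nat \<Rightarrow> nat \<Rightarrow> nat \<Rightarrow> 'a :: {zero, one} mat" where
  "matrix_unit n i j = mat n n (\<lambda>(k, l). if k = i \<and> l = j then 1 else 0)"

lemma commute_matrix_unit_entry:
  fixes Z :: "'a :: comm_ring_1 mat"
  assumes Z: "Z \<in> carrier_mat n n" and comm: "Z * matrix_unit n i j = matrix_unit n i j * Z"
    and k: "k < n" and i: "i < n" and j: "j < n"
  shows "Z $$ (k, i) = (if k = i then Z $$ (j, j) else 0)"
proof -
  have "(Z * matrix_unit n i j) $$ (k, j) = (\<Sum>l\<in>{0..<n}. Z $$ (k, l) * (if l = i then 1 else 0))"
    using Z k j unfolding matrix_unit_def by (simp add: scalar_prod_def)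
  also have "\<dots> = Z $$ (k, i)" using i by (simp add: if_distrib cong: if_cong)
  finally have left: "(Z * matrix_unit n i j) $$ (k, j) = Z $$ (k, i)" .
  have "(matrix_unit n i j * Z) $$ (k, j) = (\<Sum>l\<in>{0..<n}. (if k = i \<and> l = j then 1 else 0) * Z $$ (l, j))"
    using Z k j unfolding matrix_unit_def by (simp add: scalar_prod_def)
  also have "\<dots> = (\<Sum>l\<in>{0..<n}. if l = j then (if k = i then Z $$ (j, j) else 0) else 0)"
    by (intro sum.cong) auto
  also have "\<dots> = (if k = i then Z $$ (j, j) else 0)" using j by simp
  finally show ?thesis using comm left by simp
qed

lemma block_commutant_entry:
  fixes Z :: "'a :: comm_ring_1 mat"
  assumes Z: "Z \<in> carrier_mat (2 * h) (2 * h)"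
    and comm: "\<And>i j. i < 2 * h \<Longrightarrow> j < 2 * h \<Longrightarrow> (i < h \<longleftrightarrow> j < h) \<Longrightarrow>
      Z * matrix_unit (2 * h) i j = matrix_unit (2 * h) i j * Z"
    and k: "k < 2 * h" and i: "i < 2 * h"
  shows "Z $$ (k, i) = (if k = i then if i < h then Z $$ (0, 0) else Z $$ (h, h) else 0)"
proof -
  have entry: "Z $$ (k, i) = (if k = i then Z $$ (j, j) else 0)"
    if "j < 2 * h" "i < h \<longleftrightarrow> j < h" for j
    using commute_matrix_unit_entry[OF Z comm[OF i that(1,2)] k i that(1)] .
  show ?thesis
    using entry[of 0] entry[of h] i by (cases "i < h") auto
qed

(* Z acts by scalars a and b on the two blocks; a^2 = b^2 and a ~= b force b = -a. *)
lemma mat_trace_block_commutant: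
  fixes Z :: "'a :: idom mat"
  assumes Z: "Z \<in> carrier_mat (2 * h) (2 * h)"
    and comm: "\<And>i j. i < 2 * h \<Longrightarrow> j < 2 * h \<Longrightarrow> (i < h \<longleftrightarrow> j < h) \<Longrightarrow>
      Z * matrix_unit (2 * h) i j = matrix_unit (2 * h) i j * Z"
    and square: "Z * Z = s \<cdot>\<^sub>m 1\<^sub>m (2 * h)"
    and nonscalar: "\<And>a. Z \<noteq> a \<cdot>\<^sub>m 1\<^sub>m (2 * h)"
  shows "mat_trace Z = 0"
proof (cases "h = 0")
  case False
  define a where "a = Z $$ (0, 0)"
  define b where "b = Z $$ (h, h)"
  have entry: "Z $$ (k, i) = (if k = i then if i < h then a else b else 0)"
    if "k < 2 * h" "i < 2 * h" for k i
    unfolding a_def b_def by (rule block_commutant_entry[OF Z comm that])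
  have diag_sq: "(if i < h then a * a else b * b) = s" if i: "i < 2 * h" for i
  proof -
    have "(Z * Z) $$ (i, i) = (\<Sum>l\<in>{0..<2 * h}. Z $$ (i, l) * Z $$ (l, i))"
      using Z i by (simp add: scalar_prod_def)
    also have "\<dots> = (\<Sum>l\<in>{0..<2 * h}. if l = i then (if i < h then a * a else b * b) else 0)"
      using i by (intro sum.cong) (auto simp: entry)
    finally show ?thesis unfolding square using i by simp
  qed
  have "a \<noteq> b"
  proof
    assume "a = b"
    then have "Z = a \<cdot>\<^sub>m 1\<^sub>m (2 * h)" using Z entry by (intro eq_matI) auto
    then show False using nonscalar by blast
  qed
  moreover have "(a - b) * (a + b) = 0"
    using diag_sq[of 0] diag_sq[of h] False by (simp add: algebra_simps)
  ultimately have "a + b = 0" by simp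
  have "{..<2 * h} = {..<h} \<union> {h..<2 * h}" by auto
  then have "mat_trace Z = (\<Sum>i<h. a) + (\<Sum>i\<in>{h..<2 * h}. b)"
    using Z unfolding mat_trace_def by (simp add: entry sum.union_disjoint disjoint_iff)
  also have "\<dots> = of_nat h * (a + b)" by (simp add: algebra_simps)
  finally show ?thesis using \<open>a + b = 0\<close> by simp
qed (use Z in \<open>simp add: mat_trace_def\<close>)

definition col_embed :: "nat \<Rightarrow> nat \<Rightarrow> nat set \<Rightarrow> 'a :: zero vec \<Rightarrow> 'a mat" where
  "col_embed n j S v = mat n n (\<lambda>(i, k). if k = j \<and> i \<in> S then v $ i else 0)"

lemma col_embed_carrier [simp]: "col_embed n j S v \<in> carrier_mat n n"
  unfolding col_embed_def by simp

lemma mult_col_embed: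
  fixes X :: "'a :: comm_ring_1 mat"
  assumes X: "X \<in> carrier_mat n n" and v: "v \<in> carrier_vec n"
    and block: "\<And>i l. i < n \<Longrightarrow> l < n \<Longrightarrow> (i \<in> S) \<noteq> (l \<in> S) \<Longrightarrow> X $$ (i, l) = 0"
  shows "X * col_embed n j S v = col_embed n j S (X *\<^sub>v v)"
proof (rule eq_matI)
  fix i k assume "i < dim_row (col_embed n j S (X *\<^sub>v v))" "k < dim_col (col_embed n j S (X *\<^sub>v v))"
  then have i: "i < n" and k: "k < n" by (auto simp: col_embed_def)
  have "(X * col_embed n j S v) $$ (i, k)
      = (\<Sum>l\<in>{0..<n}. X $$ (i, l) * (if k = j \<and> l \<in> S then v $ l else 0))"
    using X i k by (simp add: col_embed_def scalar_prod_def)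
  also have "\<dots> = (if k = j \<and> i \<in> S then (\<Sum>l\<in>{0..<n}. X $$ (i, l) * v $ l) else 0)"
    using block[OF i] by (auto intro!: sum.cong sum.neutral)
  also have "\<dots> = col_embed n j S (X *\<^sub>v v) $$ (i, k)"
    using X v i k by (simp add: col_embed_def scalar_prod_def)
  finally show "(X * col_embed n j S v) $$ (i, k) = col_embed n j S (X *\<^sub>v v) $$ (i, k)" .
qed (use X in \<open>auto simp: col_embed_def\<close>)

lemma col_embed_smult:
  fixes v :: "'a :: comm_ring_1 vec"
  shows "v \<in> carrier_vec n \<Longrightarrow> col_embed n j S (a \<cdot>\<^sub>v v) = a \<cdot>\<^sub>m col_embed n j S v"
  unfolding col_embed_def by (intro eq_matI) auto

lemma col_embed_eq_0_iff:
  assumes "j < n"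
  shows "col_embed n j S v = 0\<^sub>m n n \<longleftrightarrow> (\<forall>i<n. i \<in> S \<longrightarrow> v $ i = 0)"
proof
  assume zero: "col_embed n j S v = 0\<^sub>m n n"
  show "\<forall>i<n. i \<in> S \<longrightarrow> v $ i = 0"
  proof (intro allI impI)
    fix i assume "i < n" "i \<in> S"
    then have "col_embed n j S v $$ (i, j) = v $ i" using assms by (simp add: col_embed_def)
    then show "v $ i = 0" using zero \<open>i < n\<close> assms by simp
  qed
qed (auto simp: col_embed_def intro!: eq_matI)

lemma col_embed_zero: "col_embed m j S (0\<^sub>v m) = (0\<^sub>m m m :: 'a :: zero mat)"
  unfolding col_embed_def by (intro eq_matI) auto


section \<open>Basis elements and signs\<close>

abbreviation symdiff :: "'a set \<Rightarrow> 'a set \<Rightarrow> 'a set" where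
  "symdiff A B \<equiv> A - B \<union> (B - A)"

lemma sum_fun_apply: "(sum f S) x = (\<Sum>i\<in>S. f i x)"
  by (induct S rule: infinite_finite_induct) auto

lemma clif_zero: "0 \<in> clif n"
  unfolding clif_def by auto

lemma clif_add:
  assumes "X \<in> clif n" "Y \<in> clif n"
  shows "X + Y \<in> clif n"
  unfolding clif_def
proof (intro CollectI allI impI)
  fix A assume "(X + Y) A \<noteq> 0"
  then have "X A \<noteq> 0 \<or> Y A \<noteq> 0" by auto
  then show "A \<subseteq> {..<n}" using assms unfolding clif_def by blast
qed

lemma clif_smult: "X \<in> clif n \<Longrightarrow> (\<lambda>A. c * X A) \<in> clif n"
  unfolding clif_def by auto

lemma clif_sum: "finite S \<Longrightarrow> (\<And>i. i \<in> S \<Longrightarrow> f i \<in> clif n) \<Longrightarrow> sum f S \<in> clif n"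
  by (induct S rule: finite_induct) (auto intro: clif_add clif_zero)

lemma cl_basis_clif: "A \<subseteq> {..<n} \<Longrightarrow> cl_basis A \<in> clif n"
  unfolding clif_def cl_basis_def by auto

lemma cl_one_clif: "cl_one \<in> clif n"
  unfolding cl_one_def by (rule cl_basis_clif) auto

lemma cl_basis_apply: "cl_basis A C = (if C = A then 1 else 0)"
  unfolding cl_basis_def by simp

lemma cl_mult_clif: "cl_mult p q X Y \<in> clif (p + q)"
  unfolding clif_def
proof (intro CollectI allI impI)
  fix C assume "cl_mult p q X Y C \<noteq> 0"
  then obtain A B where "A \<in> Pow {..<p + q}" "B \<in> Pow {..<p + q}"
    "(if symdiff A B = C then X A * Y B * basis_sign p A B else 0) \<noteq> 0"
    unfolding cl_mult_def by (auto elim!: sum.not_neutral_contains_not_neutral)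
  then show "C \<subseteq> {..<p + q}" by (auto split: if_splits)
qed

lemma cl_mult_smult_left: "cl_mult p q (\<lambda>C. c * X C) Y = (\<lambda>C. c * cl_mult p q X Y C)"
  unfolding cl_mult_def by (auto simp: sum_distrib_left intro!: sum.cong)

lemma cl_mult_smult_right: "cl_mult p q X (\<lambda>C. c * Y C) = (\<lambda>C. c * cl_mult p q X Y C)"
  unfolding cl_mult_def by (auto simp: sum_distrib_left intro!: sum.cong)

lemma cl_mult_basis:
  assumes "A \<subseteq> {..<p + q}" "B \<subseteq> {..<p + q}"
  shows "cl_mult p q (cl_basis A) (cl_basis B) = (\<lambda>C. basis_sign p A B * cl_basis (symdiff A B) C)"
proof
  fix C
  have "cl_mult p q (cl_basis A) (cl_basis B) C =
      (\<Sum>A'\<in>Pow {..<p + q}. if A' = A then (\<Sum>B'\<in>Pow {..<p + q}. if B' = B then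
        (if symdiff A B = C then basis_sign p A B else 0) else 0) else 0)"
  proof -
    have "(if symdiff A' B' = C then cl_basis A A' * cl_basis B B' * basis_sign p A' B' else 0)
      = (if A' = A then (if B' = B then (if symdiff A B = C then basis_sign p A B else 0) else 0) else 0)"
      for A' B' by (auto simp: cl_basis_apply)
    then show ?thesis unfolding cl_mult_def by (intro sum.cong refl) auto
  qed
  also have "\<dots> = (if symdiff A B = C then basis_sign p A B else 0)"
    using assms by simp
  finally show "cl_mult p q (cl_basis A) (cl_basis B) C = basis_sign p A B * cl_basis (symdiff A B) C"
    by (auto simp: cl_basis_apply)
qed

lemma clif_expand:
  assumes "X \<in> clif n"
  shows "X = (\<Sum>A\<in>Pow {..<n}. (\<lambda>C. X A * cl_basis A C))"
proof
  fix C
  have "(\<Sum>A\<in>Pow {..<n}. (\<lambda>C. X A * cl_basis A C)) C = (\<Sum>A\<in>Pow {..<n}. if A = C then X C else 0)"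
    unfolding sum_fun_apply by (intro sum.cong) (auto simp: cl_basis_apply)
  also have "\<dots> = X C" using assms unfolding clif_def by auto
  finally show "X C = (\<Sum>A\<in>Pow {..<n}. (\<lambda>C. X A * cl_basis A C)) C" by simp
qed

lemma neg_one_power_shift: "(-1 :: 'a :: ring_1) ^ x = (-1) ^ (x + y) * (-1) ^ y"
proof -
  have "(-1 :: 'a) ^ (x + y) * (-1) ^ y = (-1) ^ (x + 2 * y)"
    by (simp add: power_add mult_2 mult.assoc)
  also have "\<dots> = (-1) ^ x" by (simp add: power_add power_mult)
  finally show ?thesis ..
qed

lemma prod_eta_square: "(\<Prod>a\<in>S. eta p a) * (\<Prod>a\<in>S. eta p a) = 1"
proof -
  have "(\<Prod>a\<in>S. eta p a) * (\<Prod>a\<in>S. eta p a) = (\<Prod>a\<in>S. eta p a * eta p a)"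
    by (simp only: prod.distrib)
  also have "\<dots> = 1" by (rule prod.neutral) (simp add: eta_def)
  finally show ?thesis .
qed

lemma basis_sign_square: "basis_sign p A B * basis_sign p A B = 1"
proof -
  let ?s = "(-1 :: complex) ^ card {(a, b). a \<in> A \<and> b \<in> B \<and> b < a}"
  let ?P = "\<Prod>a\<in>A \<inter> B. eta p a"
  have "basis_sign p A B * basis_sign p A B = (?s * ?s) * (?P * ?P)"
    unfolding basis_sign_def by (simp only: ac_simps)
  also have "?s * ?s = 1" by (simp add: power_add[symmetric] flip: mult_2)
  finally show ?thesis by (simp only: prod_eta_square mult_1_left)
qed

lemma basis_sign_nonzero: "basis_sign p A B \<noteq> 0"
  using basis_sign_square[of p A B] by auto

lemma cnj_basis_sign: "cnj (basis_sign p A B) = basis_sign p A B"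
proof -
  have "cnj (eta p a) = eta p a" for a by (simp add: eta_def)
  then show ?thesis unfolding basis_sign_def by simp
qed

lemma basis_sign_empty: "basis_sign p {} B = 1" "basis_sign p A {} = 1"
  unfolding basis_sign_def by auto

lemma basis_sign_singleton_swap:
  assumes B: "finite B" and odd: "odd (card (B - {b}))"
  shows "basis_sign p {b} B = - basis_sign p B {b}"
proof -
  have below: "card {(a, c). a \<in> {b} \<and> c \<in> B \<and> c < a} = card {c\<in>B. c < b}"
  proof -
    have "{(a, c). a \<in> {b} \<and> c \<in> B \<and> c < a} = (\<lambda>c. (b, c)) ` {c\<in>B. c < b}" by auto
    then show ?thesis by (simp add: card_image inj_on_def)
  qed
  have above: "card {(a, c). a \<in> B \<and> c \<in> {b} \<and> c < a} = card {c\<in>B. b < c}"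
  proof -
    have "{(a, c). a \<in> B \<and> c \<in> {b} \<and> c < a} = (\<lambda>c. (c, b)) ` {c\<in>B. b < c}" by auto
    then show ?thesis by (simp add: card_image inj_on_def)
  qed
  have "B - {b} = {c\<in>B. c < b} \<union> {c\<in>B. b < c}" by auto
  then have "card (B - {b}) = card {c\<in>B. c < b} + card {c\<in>B. b < c}"
    using B by (simp add: card_Un_disjoint disjoint_iff)
  then have "(-1 :: complex) ^ card {c\<in>B. c < b} = - ((-1) ^ card {c\<in>B. b < c})"
    using neg_one_power_shift[of "card {c\<in>B. c < b}" "card {c\<in>B. b < c}"] odd by simp
  then show ?thesis unfolding basis_sign_def below above by (simp add: Int_commute)
qed

lemma basis_sign_top_commute:
  assumes odd: "odd n" and B: "B \<subseteq> {..<n}"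
  shows "basis_sign p {..<n} B = basis_sign p B {..<n}"
proof -
  let ?X = "{(a, b). a \<in> {..<n} \<and> b \<in> B \<and> b < a}"
  let ?Y = "{(a, b). a \<in> B \<and> b \<in> {..<n} \<and> b < a}"
  let ?Y' = "{(a, b). a \<in> {..<n} \<and> b \<in> B \<and> a < b}"
  have finB: "finite B" using B finite_subset by blast
  have "finite ?X" "finite ?Y'"
    by (auto intro: finite_subset[of _ "{..<n} \<times> B"] simp: finB)
  moreover have "card ?Y = card ?Y'"
  proof -
    have "?Y = (\<lambda>(a, b). (b, a)) ` ?Y'" by auto
    then show ?thesis by (simp add: card_image inj_on_def)
  qed
  moreover have "?X \<union> ?Y' = {..<n} \<times> B - (\<lambda>b. (b, b)) ` B" using B by auto
  moreover have "card ({..<n} \<times> B - (\<lambda>b. (b, b)) ` B) = n * card B - card B"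
    using B finB by (subst card_Diff_subset) (auto simp: card_cartesian_product card_image inj_on_def)
  ultimately have "card ?X + card ?Y = (n - 1) * card B"
    by (simp add: card_Un_disjoint[symmetric] disjoint_iff diff_mult_distrib)
  then have "even (card ?X + card ?Y)" using odd by simp
  then have "(-1 :: complex) ^ card ?X = (-1) ^ card ?Y"
    using neg_one_power_shift[of "card ?X" "card ?Y"] by simp
  then show ?thesis unfolding basis_sign_def by (simp add: Int_commute)
qed


lemma cl_mult_basis_left:
  assumes "A \<subseteq> {..<p + q}"
  shows "cl_mult p q (cl_basis A) X C
    = (\<Sum>B\<in>Pow {..<p + q}. if symdiff A B = C then X B * basis_sign p A B else 0)"
proof -
  have "cl_mult p q (cl_basis A) X C = (\<Sum>A'\<in>Pow {..<p + q}. if A' = A then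
      (\<Sum>B\<in>Pow {..<p + q}. if symdiff A B = C then X B * basis_sign p A B else 0) else 0)"
    unfolding cl_mult_def by (intro sum.cong refl) (auto simp: cl_basis_apply cong: if_cong)
  then show ?thesis using assms by simp
qed

lemma cl_mult_basis_right:
  assumes "A \<subseteq> {..<p + q}"
  shows "cl_mult p q X (cl_basis A) C
    = (\<Sum>B\<in>Pow {..<p + q}. if symdiff B A = C then X B * basis_sign p B A else 0)"
proof -
  have "cl_mult p q X (cl_basis A) C = (\<Sum>B\<in>Pow {..<p + q}. \<Sum>A'\<in>Pow {..<p + q}. if A' = A then
      (if symdiff B A = C then X B * basis_sign p B A else 0) else 0)"
    unfolding cl_mult_def by (intro sum.cong refl) (auto simp: cl_basis_apply cong: if_cong)
  then show ?thesis using assms by simp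
qed

lemma cl_mult_top_commute:
  assumes "odd (p + q)"
  shows "cl_mult p q (cl_basis {..<p + q}) X = cl_mult p q X (cl_basis {..<p + q})"
proof
  fix C
  have "symdiff {..<p + q} B = symdiff B {..<p + q}" for B :: "nat set" by auto
  then show "cl_mult p q (cl_basis {..<p + q}) X C = cl_mult p q X (cl_basis {..<p + q}) C"
    unfolding cl_mult_basis_left[OF subset_refl] cl_mult_basis_right[OF subset_refl]
    using basis_sign_top_commute[OF assms] by (intro sum.cong refl) auto
qed

definition cl_inner :: "nat \<Rightarrow> cl \<Rightarrow> cl \<Rightarrow> complex" where
  "cl_inner n X Y = (\<Sum>A\<in>Pow {..<n}. cnj (X A) * Y A)"

lemma cl_inner_smult_right: "cl_inner n X (\<lambda>C. c * Y C) = c * cl_inner n X Y"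
  unfolding cl_inner_def by (simp add: sum_distrib_left algebra_simps)

lemma cl_inner_zero_right [simp]: "cl_inner n X 0 = 0"
  unfolding cl_inner_def by simp

lemma cl_inner_commute: "cl_inner n Y X = cnj (cl_inner n X Y)"
  unfolding cl_inner_def by (simp add: mult.commute)

lemma cnj_mult_self_nonneg: "0 \<le> cnj z * z"
proof -
  have "cnj z * z = complex_of_real ((cmod z)\<^sup>2)"
    using complex_norm_square[of z] by (simp add: mult.commute)
  then show ?thesis by (simp add: less_eq_complex_def)
qed

lemma cl_inner_self_nonneg: "0 \<le> cl_inner n X X"
  unfolding cl_inner_def by (intro sum_nonneg cnj_mult_self_nonneg)

lemma cl_inner_self_eq_0_iff:
  assumes "X \<in> clif n"
  shows "cl_inner n X X = 0 \<longleftrightarrow> X = 0"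
proof
  assume "cl_inner n X X = 0"
  then have "\<forall>A\<in>Pow {..<n}. cnj (X A) * X A = 0"
    unfolding cl_inner_def by (simp add: sum_nonneg_eq_0_iff cnj_mult_self_nonneg)
  then show "X = 0"
    using assms unfolding clif_def by (auto simp: fun_eq_iff)
qed simp

section \<open>Matrix representations of the Clifford algebra\<close>

locale clifford_rep =
  fixes p q :: nat and \<beta> :: "cl \<Rightarrow> complex mat"
  assumes is_beta: "is_beta p q \<beta>" and dim_pos: "1 \<le> p + q"
begin

abbreviation n :: nat where "n \<equiv> p + q"

abbreviation N :: nat where "N \<equiv> clif_N (p + q)"

lemma N_even: "N = 2 * (N div 2)" "0 < N div 2"
proof -
  obtain k where "(n + 1) div 2 = Suc k" using dim_pos by (cases "(n + 1) div 2") auto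
  then show "N = 2 * (N div 2)" "0 < N div 2" unfolding clif_N_def by auto
qed

lemma beta_target_carrier: "beta_target n \<subseteq> carrier_mat N N"
  unfolding beta_target_def Let_def by auto

lemma beta_target_odd:
  "odd n \<Longrightarrow> beta_target n = {A \<in> carrier_mat N N. \<forall>i<N. \<forall>j<N.
      ((i < N div 2) \<noteq> (j < N div 2)) \<longrightarrow> A $$ (i, j) = 0}"
  unfolding beta_target_def Let_def by simp

lemma beta_in_target: "X \<in> clif n \<Longrightarrow> \<beta> X \<in> beta_target n"
  using is_beta unfolding is_beta_def bij_betw_def by auto

lemma beta_carrier: "X \<in> clif n \<Longrightarrow> \<beta> X \<in> carrier_mat N N"
  using beta_in_target beta_target_carrier by auto

lemma beta_add: "X \<in> clif n \<Longrightarrow> Y \<in> clif n \<Longrightarrow> \<beta> (X + Y) = \<beta> X + \<beta> Y"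
  using is_beta unfolding is_beta_def by auto

lemma beta_smult: "X \<in> clif n \<Longrightarrow> \<beta> (\<lambda>A. c * X A) = c \<cdot>\<^sub>m \<beta> X"
  using is_beta unfolding is_beta_def by auto

lemma beta_mult: "X \<in> clif n \<Longrightarrow> Y \<in> clif n \<Longrightarrow> \<beta> (cl_mult p q X Y) = \<beta> X * \<beta> Y"
  using is_beta unfolding is_beta_def by auto

lemma beta_one: "\<beta> cl_one = 1\<^sub>m N"
  using is_beta unfolding is_beta_def by auto

lemma beta_inj: "X \<in> clif n \<Longrightarrow> Y \<in> clif n \<Longrightarrow> \<beta> X = \<beta> Y \<Longrightarrow> X = Y"
  using is_beta unfolding is_beta_def bij_betw_def inj_on_def by auto

lemma beta_surj: "U \<in> beta_target n \<Longrightarrow> \<exists>X\<in>clif n. \<beta> X = U"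
  using is_beta unfolding is_beta_def bij_betw_def by (metis imageE)

lemma beta_scalar: "\<beta> (\<lambda>A. c * cl_one A) = c \<cdot>\<^sub>m 1\<^sub>m N"
  using beta_smult[OF cl_one_clif] beta_one by simp

lemma beta_zero: "\<beta> 0 = 0\<^sub>m N N"
proof -
  have "(0 :: cl) = (\<lambda>A. 0 * cl_one A)" by (simp add: fun_eq_iff)
  then have "\<beta> 0 = 0 \<cdot>\<^sub>m 1\<^sub>m N" using beta_scalar[of 0] by metis
  also have "\<dots> = 0\<^sub>m N N" by (intro eq_matI) auto
  finally show ?thesis .
qed

lemma beta_eq_0_iff: "X \<in> clif n \<Longrightarrow> \<beta> X = 0\<^sub>m N N \<longleftrightarrow> X = 0"
  using beta_inj[OF _ clif_zero] beta_zero by auto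

lemma beta_minus_scalar:
  assumes X: "X \<in> clif n"
  shows "(\<lambda>A. X A - c * cl_one A) \<in> clif n" "\<beta> (\<lambda>A. X A - c * cl_one A) = \<beta> X - c \<cdot>\<^sub>m 1\<^sub>m N"
proof -
  have eq: "(\<lambda>A. X A - c * cl_one A) = X + (\<lambda>A. (- c) * cl_one A)" by auto
  show "(\<lambda>A. X A - c * cl_one A) \<in> clif n"
    unfolding eq by (intro clif_add clif_smult X cl_one_clif)
  have "\<beta> (\<lambda>A. X A - c * cl_one A) = \<beta> X + (- c) \<cdot>\<^sub>m 1\<^sub>m N"
    unfolding eq beta_add[OF X clif_smult[OF cl_one_clif]] beta_scalar ..
  also have "\<dots> = \<beta> X - c \<cdot>\<^sub>m 1\<^sub>m N"
    using beta_carrier[OF X] by (intro eq_matI) auto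
  finally show "\<beta> (\<lambda>A. X A - c * cl_one A) = \<beta> X - c \<cdot>\<^sub>m 1\<^sub>m N" .
qed

lemma cl_mult_assoc:
  assumes "X \<in> clif n" "Y \<in> clif n" "Z \<in> clif n"
  shows "cl_mult p q (cl_mult p q X Y) Z = cl_mult p q X (cl_mult p q Y Z)"
proof (rule beta_inj)
  have "\<beta> (cl_mult p q (cl_mult p q X Y) Z) = \<beta> X * \<beta> Y * \<beta> Z"
    using assms by (simp add: beta_mult cl_mult_clif)
  also have "\<dots> = \<beta> X * (\<beta> Y * \<beta> Z)"
    using assms beta_carrier by (intro assoc_mult_mat[of _ N N _ N _ N]) auto
  also have "\<dots> = \<beta> (cl_mult p q X (cl_mult p q Y Z))"
    using assms by (simp add: beta_mult cl_mult_clif)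
  finally show "\<beta> (cl_mult p q (cl_mult p q X Y) Z) = \<beta> (cl_mult p q X (cl_mult p q Y Z))" .
qed (rule cl_mult_clif)+

lemma cl_mult_one_left: "X \<in> clif n \<Longrightarrow> cl_mult p q cl_one X = X"
  by (rule beta_inj)
    (auto simp: cl_mult_clif beta_mult cl_one_clif beta_one left_mult_one_mat[OF beta_carrier])

lemma cl_mult_one_right: "X \<in> clif n \<Longrightarrow> cl_mult p q X cl_one = X"
  by (rule beta_inj)
    (auto simp: cl_mult_clif beta_mult cl_one_clif beta_one right_mult_one_mat[OF beta_carrier])

lemma basis_sign_split:
  assumes A: "A \<subseteq> {..<n}" and B: "B \<subseteq> {..<n}"
  shows "basis_sign p A B = basis_sign p A A * basis_sign p A (symdiff A B)"
proof -
  let ?e = cl_basis and ?s = "basis_sign p"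
  have AB: "symdiff A B \<subseteq> {..<n}" using A B by auto
  have "(\<lambda>C. ?s A B * ?s A (symdiff A B) * ?e B C) = cl_mult p q (?e A) (cl_mult p q (?e A) (?e B))"
  proof -
    have "symdiff A (symdiff A B) = B" by auto
    then show ?thesis
      using cl_mult_basis[OF A B] cl_mult_basis[OF A AB] by (simp add: cl_mult_smult_right mult.assoc)
  qed
  also have "\<dots> = cl_mult p q (cl_mult p q (?e A) (?e A)) (?e B)"
    using A B by (simp add: cl_mult_assoc cl_basis_clif)
  also have "\<dots> = (\<lambda>C. ?s A A * ?e B C)"
    using cl_mult_basis[OF A A] cl_mult_basis[of "{}" p q B] B
    by (simp add: cl_mult_smult_left basis_sign_empty)
  finally have "?s A B * ?s A (symdiff A B) = ?s A A"
    by (metis (no_types, lifting) cl_basis_apply mult.right_neutral)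
  then have "?s A B * ?s A (symdiff A B) * ?s A (symdiff A B) = ?s A A * ?s A (symdiff A B)"
    by simp
  then show ?thesis by (simp add: basis_sign_square mult.assoc)
qed

lemma basis_inv_eq:
  assumes A: "A \<subseteq> {..<n}"
  shows "basis_inv p q A = (\<lambda>C. basis_sign p A A * cl_basis A C)"
  unfolding basis_inv_def
proof (rule the_equality)
  let ?Y = "\<lambda>C. basis_sign p A A * cl_basis A C"
  have Y: "?Y \<in> clif n" by (intro clif_smult cl_basis_clif A)
  have right: "cl_mult p q (cl_basis A) ?Y = cl_one" and left: "cl_mult p q ?Y (cl_basis A) = cl_one"
    by (simp_all add: cl_mult_smult_right cl_mult_smult_left cl_mult_basis[OF A A] cl_one_def
        mult.assoc[symmetric] basis_sign_square)
  show "?Y \<in> clif n \<and> cl_mult p q (cl_basis A) ?Y = cl_one \<and> cl_mult p q ?Y (cl_basis A) = cl_one"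
    using Y left right by blast
  fix X
  assume X: "X \<in> clif n \<and> cl_mult p q (cl_basis A) X = cl_one \<and> cl_mult p q X (cl_basis A) = cl_one"
  have "X = cl_mult p q (cl_mult p q ?Y (cl_basis A)) X" using X left cl_mult_one_left by simp
  also have "\<dots> = cl_mult p q ?Y (cl_mult p q (cl_basis A) X)"
    using X Y A by (simp add: cl_mult_assoc cl_basis_clif)
  also have "\<dots> = ?Y" using X Y cl_mult_one_right by simp
  finally show "X = ?Y" .
qed

lemma cl_dagger_eq:
  "cl_dagger p q M = (\<lambda>C. if C \<subseteq> {..<n} then cnj (M C) * basis_sign p C C else 0)"
proof
  fix C
  have "cl_dagger p q M C = (\<Sum>A\<in>Pow {..<n}. if A = C then cnj (M C) * basis_sign p C C else 0)"
    unfolding cl_dagger_def by (intro sum.cong refl) (auto simp: basis_inv_eq cl_basis_apply)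
  then show "cl_dagger p q M C = (if C \<subseteq> {..<n} then cnj (M C) * basis_sign p C C else 0)"
    by simp
qed

lemma cl_dagger_clif: "cl_dagger p q M \<in> clif n"
  unfolding cl_dagger_eq clif_def by auto


lemma cl_inner_mult_left:
  "cl_inner n (cl_mult p q M X) Y = cl_inner n X (cl_mult p q (cl_dagger p q M) Y)"
proof -
  let ?P = "Pow {..<n}" and ?s = "basis_sign p"
  have "cl_inner n (cl_mult p q M X) Y = (\<Sum>C\<in>?P. \<Sum>A\<in>?P. \<Sum>B\<in>?P.
      if symdiff A B = C then cnj (M A) * cnj (X B) * ?s A B * Y C else 0)"
    unfolding cl_inner_def cl_mult_def
    by (simp add: sum_distrib_right cnj_basis_sign if_distrib if_distribR cong: if_cong)
  also have "\<dots> = (\<Sum>A\<in>?P. \<Sum>B\<in>?P. \<Sum>C\<in>?P.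
      if symdiff A B = C then cnj (M A) * cnj (X B) * ?s A B * Y C else 0)"
    by (subst sum.swap, subst (2) sum.swap, rule refl)
  also have "\<dots> = (\<Sum>A\<in>?P. \<Sum>B\<in>?P. cnj (M A) * cnj (X B) * ?s A B * Y (symdiff A B))"
    by (intro sum.cong refl) (auto simp: sum.delta)
  also have "\<dots> = (\<Sum>A\<in>?P. \<Sum>B\<in>?P.
      cnj (X B) * (cnj (M A) * ?s A A) * Y (symdiff A B) * ?s A (symdiff A B))"
  proof (intro sum.cong refl)
    fix A B assume "A \<in> ?P" "B \<in> ?P"
    then have "?s A B = ?s A A * ?s A (symdiff A B)" by (intro basis_sign_split) auto
    then show "cnj (M A) * cnj (X B) * ?s A B * Y (symdiff A B)
        = cnj (X B) * (cnj (M A) * ?s A A) * Y (symdiff A B) * ?s A (symdiff A B)" by simp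
  qed
  also have "\<dots> = (\<Sum>B\<in>?P. \<Sum>A\<in>?P. \<Sum>D\<in>?P.
      if symdiff A D = B then cnj (X B) * (cl_dagger p q M A * Y D * ?s A D) else 0)"
  proof -
    have "symdiff A D = B \<longleftrightarrow> D = symdiff A B" for A B D :: "nat set" by auto
    then show ?thesis
      by (subst sum.swap, intro sum.cong refl) (auto simp: sum.delta cl_dagger_eq cong: if_cong)
  qed
  also have "\<dots> = cl_inner n X (cl_mult p q (cl_dagger p q M) Y)"
    unfolding cl_inner_def cl_mult_def
    by (simp add: sum_distrib_left if_distrib if_distribR cong: if_cong)
  finally show ?thesis .
qed

lemma cl_inner_dagger_mult_left:
  "cl_inner n (cl_mult p q (cl_dagger p q M) X) Y = cl_inner n X (cl_mult p q M Y)"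
  using cl_inner_mult_left[of M Y X] cl_inner_commute by metis

lemma scalar_part_dagger_mult:
  assumes M: "M \<in> clif n"
  shows "scalar_part (cl_mult p q (cl_dagger p q M) M) = cl_inner n M M"
proof -
  have "cl_inner n M M = cl_inner n (cl_mult p q M cl_one) M" using cl_mult_one_right[OF M] by simp
  also have "\<dots> = cl_inner n cl_one (cl_mult p q (cl_dagger p q M) M)" by (rule cl_inner_mult_left)
  also have "\<dots> = scalar_part (cl_mult p q (cl_dagger p q M) M)"
  proof -
    have "cl_inner n cl_one X = (\<Sum>A\<in>Pow {..<n}. if A = {} then X A else 0)" for X
      unfolding cl_inner_def cl_one_def by (intro sum.cong) (auto simp: cl_basis_apply)
    then show ?thesis unfolding scalar_part_def by simp
  qed
  finally show ?thesis by simp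
qed

lemma dagger_mult_eq_0_imp:
  assumes "cl_mult p q (cl_dagger p q M) (cl_mult p q M X) = 0"
  shows "cl_mult p q M X = 0"
proof -
  have "cl_inner n (cl_mult p q M X) (cl_mult p q M X) = 0"
    unfolding cl_inner_mult_left assms by simp
  then show ?thesis using cl_inner_self_eq_0_iff[OF cl_mult_clif] by blast
qed

(* gram M is the element T = M^dagger M of the theorem. *)
abbreviation gram :: "cl \<Rightarrow> cl" where
  "gram M \<equiv> cl_mult p q (cl_dagger p q M) M"

lemma gram_clif: "gram M \<in> clif n"
  by (rule cl_mult_clif)

context
  fixes M :: cl
  assumes M: "M \<in> clif n"
begin

lemma gram_mult:
  "X \<in> clif n \<Longrightarrow> cl_mult p q (gram M) X = cl_mult p q (cl_dagger p q M) (cl_mult p q M X)"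
  using M by (simp add: cl_mult_assoc cl_dagger_clif)

lemma gram_mult_eq_0_imp: "X \<in> clif n \<Longrightarrow> cl_mult p q (gram M) X = 0 \<Longrightarrow> cl_mult p q M X = 0"
  by (rule dagger_mult_eq_0_imp) (simp only: gram_mult[symmetric])

lemma gram_square_mult_eq_0_imp:
  assumes X: "X \<in> clif n" and GGX: "cl_mult p q (cl_mult p q (gram M) (gram M)) X = 0"
  shows "cl_mult p q (gram M) X = 0"
proof -
  have GX: "cl_mult p q (gram M) X \<in> clif n" by (rule cl_mult_clif)
  have "cl_mult p q (gram M) (cl_mult p q (gram M) X) = 0"
    using GGX X by (simp add: cl_mult_assoc gram_clif)
  then have MGX: "cl_mult p q M (cl_mult p q (gram M) X) = 0" by (rule gram_mult_eq_0_imp[OF GX])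
  have "cl_inner n (cl_mult p q (gram M) X) (cl_mult p q (gram M) X)
      = cl_inner n (cl_mult p q M X) (cl_mult p q M (cl_mult p q (gram M) X))"
    unfolding gram_mult[OF X] cl_inner_dagger_mult_left ..
  also have "\<dots> = 0" unfolding MGX by simp
  finally show ?thesis using cl_inner_self_eq_0_iff[OF GX] by blast
qed

lemma gram_eigenvalue_nonneg:
  assumes X: "X \<in> clif n" "X \<noteq> 0" and eigen: "cl_mult p q (gram M) X = (\<lambda>C. a * X C)"
  shows "0 \<le> a"
proof -
  have "cl_inner n (cl_mult p q M X) (cl_mult p q M X) = cl_inner n X (cl_mult p q (gram M) X)"
    unfolding gram_mult[OF X(1)] cl_inner_mult_left ..
  also have "\<dots> = a * cl_inner n X X" unfolding eigen cl_inner_smult_right ..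
  finally have eq: "cl_inner n (cl_mult p q M X) (cl_mult p q M X) = a * cl_inner n X X" .
  have "0 < cl_inner n X X"
    using cl_inner_self_nonneg[of n X] cl_inner_self_eq_0_iff[OF X(1)] X(2) by (auto simp: order_le_less)
  with eq cl_inner_self_nonneg[of n "cl_mult p q M X"] show ?thesis
    by (auto simp: less_eq_complex_def less_complex_def zero_le_mult_iff)
qed

end

definition cl_trace :: "cl \<Rightarrow> complex" where
  "cl_trace X = mat_trace (\<beta> X)"

lemma cl_trace_add: "X \<in> clif n \<Longrightarrow> Y \<in> clif n \<Longrightarrow> cl_trace (X + Y) = cl_trace X + cl_trace Y"
  unfolding cl_trace_def by (simp add: beta_add mat_trace_add[OF beta_carrier beta_carrier])

lemma cl_trace_smult: "X \<in> clif n \<Longrightarrow> cl_trace (\<lambda>C. c * X C) = c * cl_trace X"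
  unfolding cl_trace_def by (simp add: beta_smult mat_trace_smult[OF beta_carrier])

lemma cl_trace_sum:
  "finite S \<Longrightarrow> (\<And>i. i \<in> S \<Longrightarrow> f i \<in> clif n) \<Longrightarrow> cl_trace (sum f S) = (\<Sum>i\<in>S. cl_trace (f i))"
proof (induct S rule: finite_induct)
  case empty
  then show ?case by (simp only: sum.empty cl_trace_def beta_zero) (simp add: mat_trace_def)
qed (simp add: cl_trace_add clif_sum)

lemma cl_trace_mult_commute:
  "X \<in> clif n \<Longrightarrow> Y \<in> clif n \<Longrightarrow> cl_trace (cl_mult p q X Y) = cl_trace (cl_mult p q Y X)"
  unfolding cl_trace_def by (simp add: beta_mult mat_trace_mult_comm[OF beta_carrier beta_carrier])

lemma cl_trace_one: "cl_trace cl_one = of_nat N"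
  unfolding cl_trace_def beta_one mat_trace_one ..

(* With A = B symdiff {b}, e_A e_b is a multiple of e_B, and e_b anticommutes with e_B since
   |B - {b}| is odd. So e_b (e_A e_b) and (e_A e_b) e_b are opposite multiples of e_A, while
   cyclicity gives them equal traces. *)
lemma cl_trace_basis_swap:
  assumes b: "b < n" and B: "B \<subseteq> {..<n}" and odd: "odd (card (B - {b}))"
  shows "cl_trace (cl_basis (symdiff B {b})) = 0"
proof -
  let ?A = "symdiff B {b}" and ?e = cl_basis and ?s = "basis_sign p"
  have A: "?A \<subseteq> {..<n}" and b': "{b} \<subseteq> {..<n}" using b B by auto
  have eA: "?e ?A \<in> clif n" by (rule cl_basis_clif[OF A])
  have Ab: "cl_mult p q (?e ?A) (?e {b}) = (\<lambda>C. ?s ?A {b} * ?e B C)"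
  proof -
    have "symdiff ?A {b} = B" by auto
    then show ?thesis using cl_mult_basis[OF A b'] by simp
  qed
  have "cl_mult p q (?e {b}) (cl_mult p q (?e ?A) (?e {b})) = (\<lambda>C. ?s ?A {b} * (?s {b} B * ?e ?A C))"
  proof -
    have "symdiff {b} B = ?A" by auto
    then show ?thesis unfolding Ab cl_mult_smult_right cl_mult_basis[OF b' B] by simp
  qed
  moreover have "cl_mult p q (cl_mult p q (?e ?A) (?e {b})) (?e {b}) = (\<lambda>C. ?s ?A {b} * (?s B {b} * ?e ?A C))"
    unfolding Ab cl_mult_smult_left cl_mult_basis[OF B b'] ..
  moreover have "cl_trace (cl_mult p q (?e {b}) (cl_mult p q (?e ?A) (?e {b})))
      = cl_trace (cl_mult p q (cl_mult p q (?e ?A) (?e {b})) (?e {b}))"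
    by (rule cl_trace_mult_commute) (auto intro: cl_basis_clif[OF b'] cl_mult_clif)
  ultimately have "?s ?A {b} * ?s {b} B * cl_trace (?e ?A) = ?s ?A {b} * ?s B {b} * cl_trace (?e ?A)"
    by (simp add: cl_trace_smult eA clif_smult mult.assoc)
  then have "?s {b} B * cl_trace (?e ?A) = ?s B {b} * cl_trace (?e ?A)"
    using basis_sign_nonzero[of p ?A "{b}"] by (simp add: mult.assoc)
  then have "- ?s B {b} * cl_trace (?e ?A) = ?s B {b} * cl_trace (?e ?A)"
    using basis_sign_singleton_swap[OF finite_subset[OF B] odd] by simp
  then show ?thesis using basis_sign_nonzero[of p B "{b}"] by simp
qed

(* For odd n the pseudoscalar is central, so its image commutes with the block-diagonal target
   algebra; it squares to a scalar without being one. *)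
lemma cl_trace_top:
  assumes odd: "odd n"
  shows "cl_trace (cl_basis {..<n}) = 0"
proof -
  let ?top = "cl_basis {..<n}" and ?h = "N div 2"
  have top: "?top \<in> clif n" by (rule cl_basis_clif) simp
  have N: "N = 2 * ?h" by (rule N_even(1))
  have Z: "\<beta> ?top \<in> carrier_mat (2 * ?h) (2 * ?h)" using beta_carrier[OF top] N by simp
  have "\<beta> ?top * matrix_unit (2 * ?h) i j = matrix_unit (2 * ?h) i j * \<beta> ?top"
    if "i < 2 * ?h" "j < 2 * ?h" "i < ?h \<longleftrightarrow> j < ?h" for i j
  proof -
    have "matrix_unit N i j \<in> beta_target n"
      unfolding beta_target_odd[OF odd] matrix_unit_def using that N by auto
    then obtain X where X: "X \<in> clif n" "\<beta> X = matrix_unit N i j" using beta_surj by blast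
    have "\<beta> ?top * \<beta> X = \<beta> X * \<beta> ?top"
      using cl_mult_top_commute[OF odd, of X] beta_mult[OF top X(1)] beta_mult[OF X(1) top] by simp
    then show ?thesis using X N by simp
  qed
  moreover have "\<beta> ?top * \<beta> ?top = basis_sign p {..<n} {..<n} \<cdot>\<^sub>m 1\<^sub>m (2 * ?h)"
  proof -
    have "cl_mult p q ?top ?top = (\<lambda>C. basis_sign p {..<n} {..<n} * cl_one C)"
      using cl_mult_basis[of "{..<n}" p q "{..<n}"] by (simp add: cl_one_def)
    then show ?thesis using top N by (simp add: beta_mult[symmetric] beta_scalar)
  qed
  moreover have "\<beta> ?top \<noteq> a \<cdot>\<^sub>m 1\<^sub>m (2 * ?h)" for a
  proof
    assume "\<beta> ?top = a \<cdot>\<^sub>m 1\<^sub>m (2 * ?h)"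
    then have "?top = (\<lambda>C. a * cl_one C)"
      using N beta_scalar by (intro beta_inj[OF top clif_smult[OF cl_one_clif]]) simp
    moreover have "0 \<in> {..<n}" unfolding lessThan_iff using dim_pos by linarith
    then have "{..<n} \<noteq> {}" by blast
    ultimately show False
      by (metis (no_types, lifting) cl_basis_apply cl_one_def mult_zero_right zero_neq_one)
  qed
  ultimately show ?thesis
    unfolding cl_trace_def by (rule mat_trace_block_commutant[OF Z])
qed

lemma cl_trace_basis:
  assumes A: "A \<subseteq> {..<n}" "A \<noteq> {}"
  shows "cl_trace (cl_basis A) = 0"
proof -
  have finA: "finite A" using A finite_subset by blast
  show ?thesis
  proof (cases "even (card A)")
    case True
    obtain b where b: "b \<in> A" using A by auto
    have "symdiff (A - {b}) {b} = A" using b by auto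
    moreover have "odd (card (A - {b} - {b}))"
      using True b finA A by (simp add: card_gt_0_iff)
    ultimately show ?thesis using cl_trace_basis_swap[of b "A - {b}"] b A by auto
  next
    case False
    show ?thesis
    proof (cases "A = {..<n}")
      case True
      then show ?thesis using False cl_trace_top by simp
    next
      case False
      then obtain b where b: "b < n" "b \<notin> A" using A by auto
      then have "symdiff (insert b A) {b} = A" "insert b A - {b} = A" by auto
      then show ?thesis using cl_trace_basis_swap[of b "insert b A"] b A \<open>odd (card A)\<close> by auto
    qed
  qed
qed

lemma cl_trace_eq_scalar_part:
  assumes X: "X \<in> clif n"
  shows "cl_trace X = of_nat N * scalar_part X"
proof -
  have "cl_trace X = (\<Sum>A\<in>Pow {..<n}. cl_trace (\<lambda>C. X A * cl_basis A C))"
    by (subst clif_expand[OF X], rule cl_trace_sum) (auto intro: clif_smult cl_basis_clif)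
  also have "\<dots> = (\<Sum>A\<in>Pow {..<n}. if A = {} then of_nat N * X {} else 0)"
    by (intro sum.cong refl)
      (auto simp: cl_trace_smult[OF cl_basis_clif] cl_trace_basis cl_trace_one simp flip: cl_one_def)
  finally show ?thesis unfolding scalar_part_def by simp
qed

lemma Mseq_clif: "M \<in> clif n \<Longrightarrow> Mseq p q N M k \<in> clif n"
  by (induct k) (auto intro: cl_mult_clif)

lemma beta_Mseq:
  assumes M: "M \<in> clif n"
  shows "\<beta> (Mseq p q N M k) = faddeev_mat (\<beta> M) (\<lambda>j. char_coeff p q M (Suc j)) k"
proof (induct k)
  case (Suc k)
  have X: "Mseq p q N M k \<in> clif n" by (rule Mseq_clif[OF M])
  have "\<beta> (Mseq p q N M (Suc k))
      = \<beta> M * (\<beta> (Mseq p q N M k) - char_coeff p q M (Suc k) \<cdot>\<^sub>m 1\<^sub>m N)"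
    unfolding Mseq.simps beta_mult[OF M beta_minus_scalar(1)[OF X]] beta_minus_scalar(2)[OF X]
    by (simp add: char_coeff_def)
  then show ?case using Suc beta_carrier[OF M] by simp
qed (simp add: M)

lemma char_coeff_eq_coeff_char_poly:
  assumes M: "M \<in> clif n" and k: "1 \<le> k" "k \<le> N"
  shows "char_coeff p q M k = - coeff (char_poly (\<beta> M)) (N - k)"
proof -
  have "of_nat (Suc j) * char_coeff p q M (Suc j)
      = mat_trace (faddeev_mat (\<beta> M) (\<lambda>j. char_coeff p q M (Suc j)) j)" for j
  proof -
    have "mat_trace (faddeev_mat (\<beta> M) (\<lambda>j. char_coeff p q M (Suc j)) j) = cl_trace (Mseq p q N M j)"
      unfolding cl_trace_def beta_Mseq[OF M] ..
    also have "\<dots> = of_nat N * scalar_part (Mseq p q N M j)"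
      by (rule cl_trace_eq_scalar_part[OF Mseq_clif[OF M]])
    finally show ?thesis unfolding char_coeff_def by (simp del: of_nat_Suc)
  qed
  from faddeev_leverrier[OF beta_carrier[OF M] this, of "k - 1"]
  show ?thesis using k by simp
qed


(* The diagonal blocks of the target algebra, each given as a column index inside the block
   together with the block's index range. *)
definition target_blocks :: "(nat \<times> nat set) list" where
  "target_blocks = (if even n then [(0, {..<N})]
     else [(0, {..<N div 2}), (N div 2, {N div 2..<N})])"

lemma target_block_col: "(j, S) \<in> set target_blocks \<Longrightarrow> j < N"
  using N_even unfolding target_blocks_def by (auto split: if_splits)

lemma col_embed_in_target: "(j, S) \<in> set target_blocks \<Longrightarrow> col_embed N j S v \<in> beta_target n"
  using N_even unfolding beta_target_def target_blocks_def col_embed_def Let_def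
  by (auto split: if_splits)

lemma target_mult_col_embed:
  assumes "(j, S) \<in> set target_blocks" "U \<in> beta_target n" "v \<in> carrier_vec N"
  shows "U * col_embed N j S v = col_embed N j S (U *\<^sub>v v)"
proof (rule mult_col_embed)
  show "U \<in> carrier_mat N N" using assms(2) beta_target_carrier by auto
  show "U $$ (i, l) = 0" if "i < N" "l < N" "(i \<in> S) \<noteq> (l \<in> S)" for i l
    using assms(1,2) that unfolding target_blocks_def beta_target_def Let_def
    by (auto split: if_splits)
qed (rule assms(3))

lemma vec_eq_0_iff_blocks:
  assumes "v \<in> carrier_vec N"
  shows "v = 0\<^sub>v N \<longleftrightarrow> (\<forall>(j, S)\<in>set target_blocks. \<forall>i<N. i \<in> S \<longrightarrow> v $ i = 0)"
proof
  assume blocks: "\<forall>(j, S)\<in>set target_blocks. \<forall>i<N. i \<in> S \<longrightarrow> v $ i = 0"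
  have "v $ i = 0" if "i < N" for i
    using blocks that unfolding target_blocks_def by (cases "i < N div 2") (auto split: if_splits)
  then show "v = 0\<^sub>v N" using assms by (intro eq_vecI) auto
qed auto

(* A vector is tested block by block through its column embedding, which lies in the image
   of beta. *)
lemma beta_kernel_transfer:
  assumes X: "X \<in> clif n" and Y: "Y \<in> clif n"
    and ann: "\<And>Z. Z \<in> clif n \<Longrightarrow> cl_mult p q X Z = 0 \<Longrightarrow> cl_mult p q Y Z = 0"
    and v: "v \<in> carrier_vec N" and Xv: "\<beta> X *\<^sub>v v = 0\<^sub>v N"
  shows "\<beta> Y *\<^sub>v v = 0\<^sub>v N"
proof -
  have "\<forall>i<N. i \<in> S \<longrightarrow> (\<beta> Y *\<^sub>v v) $ i = 0" if block: "(j, S) \<in> set target_blocks" for j S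
  proof -
    obtain Z where Z: "Z \<in> clif n" "\<beta> Z = col_embed N j S v"
      using beta_surj[OF col_embed_in_target[OF block]] by blast
    have "\<beta> (cl_mult p q X Z) = col_embed N j S (\<beta> X *\<^sub>v v)"
      using target_mult_col_embed[OF block beta_in_target[OF X] v] Z X by (simp add: beta_mult)
    then have "\<beta> (cl_mult p q X Z) = 0\<^sub>m N N"
      unfolding Xv col_embed_zero .
    then have "cl_mult p q Y Z = 0" using ann[OF Z(1)] beta_eq_0_iff[OF cl_mult_clif] by blast
    then have "\<beta> Y * \<beta> Z = 0\<^sub>m N N" using beta_mult[OF Y Z(1)] beta_zero by simp
    then have "col_embed N j S (\<beta> Y *\<^sub>v v) = 0\<^sub>m N N"
      using target_mult_col_embed[OF block beta_in_target[OF Y] v] Z by simp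
    then show ?thesis by (simp only: col_embed_eq_0_iff[OF target_block_col[OF block]])
  qed
  then show ?thesis using vec_eq_0_iff_blocks[of "\<beta> Y *\<^sub>v v"] beta_carrier[OF Y] v by auto
qed

context
  fixes M :: cl
  assumes M: "M \<in> clif n"
begin

lemma mat_kernel_beta_gram: "mat_kernel (\<beta> (gram M)) = mat_kernel (\<beta> M)"
proof -
  have D: "\<beta> (cl_dagger p q M) \<in> carrier_mat N N" by (rule beta_carrier[OF cl_dagger_clif])
  have TM: "\<beta> (gram M) = \<beta> (cl_dagger p q M) * \<beta> M" by (simp add: beta_mult cl_dagger_clif M)
  have "\<beta> M *\<^sub>v v = 0\<^sub>v N" if "v \<in> carrier_vec N" "\<beta> (gram M) *\<^sub>v v = 0\<^sub>v N" for v
    by (rule beta_kernel_transfer[OF gram_clif M _ that]) (rule gram_mult_eq_0_imp[OF M])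
  moreover have "\<beta> (gram M) *\<^sub>v v = 0\<^sub>v N" if "v \<in> carrier_vec N" "\<beta> M *\<^sub>v v = 0\<^sub>v N" for v
    using that D beta_carrier[OF M] by (auto simp: TM assoc_mult_mat_vec[of _ N N _ N])
  ultimately show ?thesis
    using beta_carrier[OF M] beta_carrier[OF gram_clif[of M]] unfolding mat_kernel_def by auto
qed

lemma beta_gram_square_kernel:
  assumes v: "v \<in> carrier_vec N" and GGv: "\<beta> (gram M) *\<^sub>v (\<beta> (gram M) *\<^sub>v v) = 0\<^sub>v N"
  shows "\<beta> (gram M) *\<^sub>v v = 0\<^sub>v N"
proof (rule beta_kernel_transfer[OF cl_mult_clif gram_clif _ v])
  show "\<beta> (cl_mult p q (gram M) (gram M)) *\<^sub>v v = 0\<^sub>v N"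
    using GGv v beta_carrier[OF gram_clif[of M]]
    by (simp add: beta_mult gram_clif assoc_mult_mat_vec[of _ N N _ N])
qed (rule gram_square_mult_eq_0_imp[OF M])

lemma beta_gram_eigenvalue_nonneg:
  assumes "eigenvalue (\<beta> (gram M)) a"
  shows "0 \<le> a"
proof -
  obtain v where v: "v \<in> carrier_vec N" "v \<noteq> 0\<^sub>v N" and Gv: "\<beta> (gram M) *\<^sub>v v = a \<cdot>\<^sub>v v"
    using assms beta_carrier[OF gram_clif[of M]] unfolding eigenvalue_def eigenvector_def by auto
  obtain j S where block: "(j, S) \<in> set target_blocks" and nz: "\<exists>i<N. i \<in> S \<and> v $ i \<noteq> 0"
    using vec_eq_0_iff_blocks[OF v(1)] v(2) by auto
  obtain X where X: "X \<in> clif n" "\<beta> X = col_embed N j S v"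
    using beta_surj[OF col_embed_in_target[OF block]] by blast
  have "col_embed N j S v \<noteq> 0\<^sub>m N N"
    unfolding col_embed_eq_0_iff[OF target_block_col[OF block]] using nz by blast
  then have "X \<noteq> 0" using X(2) beta_zero by auto
  moreover have "\<beta> (cl_mult p q (gram M) X) = \<beta> (\<lambda>C. a * X C)"
    using target_mult_col_embed[OF block beta_in_target[OF gram_clif[of M]] v(1)] X Gv
    by (simp add: beta_mult gram_clif beta_smult col_embed_smult[OF v(1)])
  then have "cl_mult p q (gram M) X = (\<lambda>C. a * X C)"
    using beta_inj[OF cl_mult_clif clif_smult[OF X(1)]] by blast
  ultimately show ?thesis using gram_eigenvalue_nonneg[OF M X(1)] by blast
qed

lemma cl_rank_plus_kernel_dim: "cl_rank p q \<beta> M + kernel_dim (\<beta> M) = N"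
  unfolding cl_rank_def by (rule rank_plus_kernel_dim[OF beta_carrier[OF M]])

lemma char_coeff_top_nonzero_iff: "char_coeff p q M N \<noteq> 0 \<longleftrightarrow> cl_rank p q \<beta> M = N"
proof -
  have A: "\<beta> M \<in> carrier_mat N N" by (rule beta_carrier[OF M])
  have "char_coeff p q M N = - poly (char_poly (\<beta> M)) 0"
    using char_coeff_eq_coeff_char_poly[OF M _ le_refl] N_even by (simp add: poly_0_coeff_0)
  moreover have "poly (char_poly (\<beta> M)) 0 = 0 \<longleftrightarrow> eigenvalue (\<beta> M) 0"
    using eigenvalue_root_char_poly[OF A] by simp
  moreover have "eigenvalue (\<beta> M) 0 \<longleftrightarrow> (\<exists>v. v \<in> carrier_vec N \<and> v \<noteq> 0\<^sub>v N \<and> \<beta> M *\<^sub>v v = 0\<^sub>v N)"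
  proof -
    have "v \<in> carrier_vec N \<Longrightarrow> (0 :: complex) \<cdot>\<^sub>v v = 0\<^sub>v N" for v by auto
    then show ?thesis unfolding eigenvalue_def eigenvector_def using A by auto
  qed
  moreover have "\<dots> \<longleftrightarrow> det (\<beta> M) = 0"
    using det_0_iff_vec_prod_zero_field[OF A] by simp
  moreover have "det (\<beta> M) = 0 \<longleftrightarrow> cl_rank p q \<beta> M \<noteq> N"
    unfolding cl_rank_def using vec_space.det_rank_iff[OF A] by blast
  ultimately show ?thesis by auto
qed

lemma char_coeff_gram_nonzero_iff:
  assumes j: "1 \<le> j" "j \<le> N"
  shows "char_coeff p q (gram M) j \<noteq> 0 \<longleftrightarrow> j \<le> cl_rank p q \<beta> M"
proof -
  have C: "\<beta> (gram M) \<in> carrier_mat N N" by (rule beta_carrier[OF gram_clif[of M]])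
  have "kernel_dim (\<beta> (gram M)) = kernel_dim (\<beta> M)"
    using kernel_dim_cong[OF mat_kernel_beta_gram] C beta_carrier[OF M] by simp
  then have "kernel_dim (\<beta> (gram M)) = N - cl_rank p q \<beta> M"
    using cl_rank_plus_kernel_dim by simp
  moreover have "char_coeff p q (gram M) j \<noteq> 0 \<longleftrightarrow> coeff (char_poly (\<beta> (gram M))) (N - j) \<noteq> 0"
    using char_coeff_eq_coeff_char_poly[OF gram_clif[of M] j] by simp
  moreover have "\<dots> \<longleftrightarrow> kernel_dim (\<beta> (gram M)) \<le> N - j"
  proof -
    have "\<And>a. eigenvalue (\<beta> (gram M)) a \<Longrightarrow> 0 \<le> a" by (rule beta_gram_eigenvalue_nonneg)
    moreover have "\<And>v. v \<in> carrier_vec N \<Longrightarrow> \<beta> (gram M) *\<^sub>v (\<beta> (gram M) *\<^sub>v v) = 0\<^sub>v N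
        \<Longrightarrow> \<beta> (gram M) *\<^sub>v v = 0\<^sub>v N"
      by (rule beta_gram_square_kernel)
    ultimately show ?thesis by (rule coeff_char_poly_nonzero_iff[OF C _ _ diff_le_self])
  qed
  ultimately show ?thesis using j cl_rank_plus_kernel_dim by linarith
qed

lemma cl_rank_pos: "M \<noteq> 0 \<Longrightarrow> 1 \<le> cl_rank p q \<beta> M"
proof -
  assume "M \<noteq> 0"
  then have "cl_inner n M M \<noteq> 0" using cl_inner_self_eq_0_iff[OF M] by blast
  moreover have "char_coeff p q (gram M) 1 = of_nat N * cl_inner n M M"
    unfolding char_coeff_def by (simp add: scalar_part_dagger_mult[OF M])
  ultimately show ?thesis using char_coeff_gram_nonzero_iff[of 1] N_even by auto
qed

end

lemma cl_rank_zero: "cl_rank p q \<beta> 0 = 0"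
  unfolding cl_rank_def beta_zero by (rule vec_space.rank_0I)

end

theorem theorem4:
  fixes p q :: nat and M :: cl and \<beta> :: "cl \<Rightarrow> complex mat"
  assumes "p + q \<ge> 1"
    and "M \<in> clif (p+q)"
    and "is_beta p q \<beta>"
  defines "N \<equiv> clif_N (p+q)"
    and "T \<equiv> cl_mult p q (cl_dagger p q M) M"
  shows "(char_coeff p q M N \<noteq> 0 \<longrightarrow> cl_rank p q \<beta> M = N)
    \<and> (\<forall>k\<in>{2..N-1}. char_coeff p q M N = 0 \<and> (\<forall>j\<in>{k+1..N-1}. char_coeff p q T j = 0)
          \<and> char_coeff p q T k \<noteq> 0 \<longrightarrow> cl_rank p q \<beta> M = k)
    \<and> (char_coeff p q M N = 0 \<and> (\<forall>j\<in>{2..N-1}. char_coeff p q T j = 0) \<and> M \<noteq> 0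
          \<longrightarrow> cl_rank p q \<beta> M = 1)
    \<and> (M = 0 \<longrightarrow> cl_rank p q \<beta> M = 0)"
proof -
  interpret clifford_rep p q \<beta> using assms(1,3) by unfold_locales
  define r where "r = cl_rank p q \<beta> M"
  have r_le: "r \<le> N" using cl_rank_plus_kernel_dim[OF assms(2)] unfolding r_def N_def by linarith
  have top: "char_coeff p q M N \<noteq> 0 \<longleftrightarrow> r = N"
    using char_coeff_top_nonzero_iff[OF assms(2)] unfolding r_def N_def .
  have coeff_T: "char_coeff p q T j \<noteq> 0 \<longleftrightarrow> j \<le> r" if "1 \<le> j" "j \<le> N" for j
    using char_coeff_gram_nonzero_iff[OF assms(2)] that unfolding r_def N_def T_def by blast
  have rank_is: "r = k" if "1 \<le> k" "k \<le> r" "char_coeff p q M N = 0"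
    and "\<forall>j\<in>{k+1..N-1}. char_coeff p q T j = 0" for k
    using that top r_le coeff_T[of r] by force
  show ?thesis
    using rank_is[of 1] rank_is coeff_T top cl_rank_pos[OF assms(2)] cl_rank_zero
    unfolding r_def by auto
qed

end
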